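(* Let $0<b<c<1$. The safe $c$-capacity for $\mathrm{Indep}_b$ equals \[ \frac{-b\log(1-c)+c\log(1-b)}{c}. \]
   Context: All logarithms are base $2$. Collaborating cryptogenography protocol: there are $n$ players $\mathrm{plr}_1,\dots,\mathrm{plr}_n$; a secret $X$ (finitely supported) and indicators $L_1,\dots,L_n\in\{0,1\}$ ($L_i=1$ means $\mathrm{plr}_i$ knows $X$) have a joint distribution. A protocol $\pi$ specifies, for every possible partial transcript $t^k=(t_1,\dots,t_k)$ (the tuple of the first $k$ messages): whether communication stops; if not, which player $\mathrm{plr}_i$ sends the next message; and probability distributions $p_?$ and $(p_x)_{x}$ on a finite message set (depending on $t^k$). $\mathrm{plr}_i$ draws the next message, with fresh independent randomness, from $p_?$ if $L_i=0$ and from $p_x$ if $L_i=1$ and $X=x$. There is a number $\mathrm{length}(\pi)$ such that the protocol always stops after at most that many messages. $T$ denotes the random full transcript. Risky/safe protocols: for $L=(L_1,\dots,L_n)$ a random vector in $\{0,1\}^n$, a risky $(n,h,L,c,\epsilon)$-protocol is a collaborating cryptogenography protocol together with a function $D$ from transcripts to $\mathcal X=\{1,\dots,2^{\lceil h\rceil}\}$ such that, when $X$ is uniform on $\mathcal X$ and independent of $L$, for every $x\in\mathcal X$, with probability at least $1-\epsilon$ a transcript $t$ drawn from $T$ conditioned on $X=x$ satisfies both $\Pr(L_i=1\mid T=t,X=x)\le c$ for all $i$, and $D(t)=x$. A safe $(n,h,L,c,\epsilon)$-protocol is a risky one that additionally satisfies $\Pr(L_i=1\mid T=t,X=x)\le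 c$ for all $i,t,x$ with $\Pr(T=t,X=x)>0$. $\mathrm{Indep}_b(n)$ is the random vector $(L_1,\dots,L_n)$ of independent $\{0,1\}$-variables with $\Pr(L_i=1)=b$. A rate $R$ is safely (resp. riskily) $c$-achievable for $\mathrm{Indep}_b$ if for all $\epsilon>0$ and all $n_0$ there is a safe (resp. risky) $(n,nR,\mathrm{Indep}_b(n),c,\epsilon)$-protocol with $n\ge n_0$. The safe (resp. risky) $c$-capacity for $\mathrm{Indep}_b$ is the supremum of all safely (resp. riskily) $c$-achievable rates. *)

theory Defs
  imports "HOL-Probability.Probability"
begin

text \<open>The set of players
 who know the secret is represented by a set S of player indices
 (L_i = 1 iff i in S).\<close>

record protocol =
  stops   :: "nat list \<Rightarrow> bool"
  speaker :: "nat list \<Rightarrow> nat"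
  p_unk   :: "nat list \<Rightarrow> nat pmf"         \<comment> \<open>distribution p_? of a player not knowing X\<close>
  p_know  :: "nat list \<Rightarrow> nat \<Rightarrow> nat pmf"  \<comment> \<open>distribution p_x of a player knowing X = x\<close>
  plength :: nat

definition valid_protocol :: "nat \<Rightarrow> protocol \<Rightarrow> bool" where
  "valid_protocol n P \<longleftrightarrow>
     (\<forall>t. plength P \<le> length t \<longrightarrow> stops P t) \<and>
     (\<forall>t. speaker P t < n) \<and>
     (\<forall>t. finite (set_pmf (p_unk P t))) \<and>
     (\<forall>t x. finite (set_pmf (p_know P t x)))"

fun run :: "protocol \<Rightarrow> nat \<Rightarrow> nat set \<Rightarrow> nat \<Rightarrow> nat list \<Rightarrow> nat list pmf" where
  "run P x S 0 t = return_pmf t"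
| "run P x S (Suc k) t =
     (if stops P t then return_pmf t
      else bind_pmf (if speaker P t \<in> S then p_know P t x else p_unk P t)
                    (\<lambda>m. run P x S k (t @ [m])))"

text \<open>Distribution of the full transcript T given X = x and L = S.\<close>
definition transcript :: "protocol \<Rightarrow> nat \<Rightarrow> nat set \<Rightarrow> nat list pmf" where
  "transcript P x S = run P x S (plength P) []"

text \<open>Pr(L = S) for L = Indep_b(n).\<close>
definition indep_weight :: "nat \<Rightarrow> real \<Rightarrow> nat set \<Rightarrow> real" where
  "indep_weight n b S = b ^ card S * (1 - b) ^ (n - card S)"

definition secret_set :: "real \<Rightarrow> nat set" where
  "secret_set h = {1 .. 2 ^ nat \<lceil>h\<rceil>}"

text \<open>Pr(T = t | X = x) (X independent of L).\<close>
definition trans_prob :: "nat \<Rightarrow> real \<Rightarrow> protocol \<Rightarrow> nat \<Rightarrow> nat list \<Rightarrow> real" where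
  "trans_prob n b P x t = (\<Sum>S\<in>Pow {..<n}. indep_weight n b S * pmf (transcript P x S) t)"

text \<open>Pr(L_i = 1 | T = t, X = x).\<close>
definition posterior :: "nat \<Rightarrow> real \<Rightarrow> protocol \<Rightarrow> nat \<Rightarrow> nat list \<Rightarrow> nat \<Rightarrow> real" where
  "posterior n b P x t i =
     (\<Sum>S\<in>{S\<in>Pow {..<n}. i \<in> S}. indep_weight n b S * pmf (transcript P x S) t)
       / trans_prob n b P x t"

text \<open>Probability, conditioned on X = x, that the transcript satisfies Q.\<close>
definition cond_prob :: "nat \<Rightarrow> real \<Rightarrow> protocol \<Rightarrow> nat \<Rightarrow> (nat list \<Rightarrow> bool) \<Rightarrow> real" where
  "cond_prob n b P x Q =
     (\<Sum>S\<in>Pow {..<n}. indep_weight n b S * measure_pmf.prob (transcript P x S) {t. Q t})"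

definition risky_protocol ::
  "nat \<Rightarrow> real \<Rightarrow> real \<Rightarrow> real \<Rightarrow> real \<Rightarrow> protocol \<Rightarrow> (nat list \<Rightarrow> nat) \<Rightarrow> bool" where
  "risky_protocol n h b c \<epsilon> P D \<longleftrightarrow>
     valid_protocol n P \<and>
     (\<forall>t. D t \<in> secret_set h) \<and>
     (\<forall>x\<in>secret_set h.
        cond_prob n b P x (\<lambda>t. (\<forall>i<n. posterior n b P x t i \<le> c) \<and> D t = x) \<ge> 1 - \<epsilon>)"

definition safe_protocol ::
  "nat \<Rightarrow> real \<Rightarrow> real \<Rightarrow> real \<Rightarrow> real \<Rightarrow> protocol \<Rightarrow> (nat list \<Rightarrow> nat) \<Rightarrow> bool" where
  "safe_protocol n h b c \<epsilon> P D \<longleftrightarrow>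
     risky_protocol n h b c \<epsilon> P D \<and>
     (\<forall>i<n. \<forall>t. \<forall>x\<in>secret_set h.
        trans_prob n b P x t > 0 \<longrightarrow> posterior n b P x t i \<le> c)"

definition safely_achievable :: "real \<Rightarrow> real \<Rightarrow> real \<Rightarrow> bool" where
  "safely_achievable b c R \<longleftrightarrow>
     (\<forall>\<epsilon>>0. \<forall>n0. \<exists>n\<ge>n0. \<exists>P D. safe_protocol n (real n * R) b c \<epsilon> P D)"

definition safe_capacity :: "real \<Rightarrow> real \<Rightarrow> real" where
  "safe_capacity b c = Sup {R. safely_achievable b c R}"

end

theory Submission
  imports Defs
begin

(* The probability of a transcript factorizes over the players:
      Pr(T = t | X = x, L = S) = C(t) * prod_i F_i(t, [i in S]), where F_i collects the messages
      sent by player i.  Summing over S, Pr(T = t | X = x) = C(t) * prod_i (a_i + d_i) with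
      a_i = b F_i(t,True), d_i = (1 - b) F_i(t,False), and the posterior of player i is
      a_i / (a_i + d_i).
   2. Converse.  If all posteriors are at most c, convexity of p |-> (1 - p)^(-s) on [0,c]
      bounds the s-tilted transcript probability by a weight of total mass Lambda(s)^n.
      A Markov-type split against the transcript distribution of "nobody knows X" shows that
      a safe protocol with 2^(nR) secrets has R s ln 2 <= ln Lambda(s) for every s > 0;
      letting s -> 0 gives R <= F(b,c).
   3. Achievability.  In round j player j sends a residue mod N: uniformly if ignorant,
      uniformly in a window of K residues selected by the codeword a_j(x) if knowing.  For
      K/N >= b(1-c)/(c(1-b)) every posterior is at most c.  A threshold decoder on the number
      of window hits, Chernoff bounds, averaging over random codebooks and expurgation give
      vanishing error for every rate 0 < R < F(b,c); rates R <= 0 are achieved trivially.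
   4. The capacity is the supremum of the achievable rates, hence F(b,c). *)

section \<open>The transcript distribution\<close>

definition step_dist :: "protocol \<Rightarrow> nat \<Rightarrow> nat set \<Rightarrow> nat list \<Rightarrow> nat pmf" where
  "step_dist P x S s = (if speaker P s \<in> S then p_know P s x else p_unk P s)"

definition completes :: "protocol \<Rightarrow> nat \<Rightarrow> nat list \<Rightarrow> nat list \<Rightarrow> bool" where
  "completes P k t0 ys \<longleftrightarrow> length ys \<le> k \<and> (\<forall>j<length ys. \<not> stops P (t0 @ take j ys))
      \<and> (length ys < k \<longrightarrow> stops P (t0 @ ys))"

lemma run_support_prefix: "t \<in> set_pmf (run P x S k t0) \<Longrightarrow> \<exists>ys. t = t0 @ ys"
proof (induction k arbitrary: t0 t)
  case 0 then show ?case by auto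
next
  case (Suc k)
  show ?case
  proof (cases "stops P t0")
    case True then show ?thesis using Suc.prems by auto
  next
    case False
    with Suc.prems obtain m where "t \<in> set_pmf (run P x S k (t0 @ [m]))"
      by (auto split: if_splits)
    from Suc.IH[OF this] show ?thesis by auto
  qed
qed

lemma pmf_run_nonprefix: "\<not> (\<exists>ys. t = t0 @ ys) \<Longrightarrow> pmf (run P x S k t0) t = 0"
  using run_support_prefix[of t P x S k t0] by (auto simp: set_pmf_iff)

lemma expectation_single_point:
  fixes g :: "'a \<Rightarrow> real"
  assumes "\<And>m. m \<noteq> y \<Longrightarrow> g m = 0"
  shows "measure_pmf.expectation M g = pmf M y * g y"
proof -
  have "g = (\<lambda>m. g y * indicator {y} m)" using assms by (auto simp: indicator_def fun_eq_iff)
  then have "measure_pmf.expectation M g = measure_pmf.expectation M (\<lambda>m. g y * indicator {y} m)"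
    by simp
  also have "\<dots> = g y * measure_pmf.prob M {y}" by simp
  finally show ?thesis by (simp add: measure_pmf_single)
qed

lemma pmf_run:
  "pmf (run P x S k t0) (t0 @ ys) =
     (if completes P k t0 ys then (\<Prod>j<length ys. pmf (step_dist P x S (t0 @ take j ys)) (ys ! j)) else 0)"
proof (induction k arbitrary: t0 ys)
  case 0
  then show ?case by (cases ys) (auto simp: completes_def)
next
  case (Suc k)
  show ?case
  proof (cases "stops P t0")
    case True
    then show ?thesis by (cases ys) (auto simp: completes_def)
  next
    case not_stop: False
    have bind: "pmf (run P x S (Suc k) t0) t =
        measure_pmf.expectation (step_dist P x S t0) (\<lambda>m. pmf (run P x S k (t0 @ [m])) t)" for t
      using not_stop by (simp add: pmf_bind step_dist_def)
    show ?thesis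
    proof (cases ys)
      case Nil
      have "pmf (run P x S (Suc k) t0) t0 = 0"
        unfolding bind by (subst pmf_run_nonprefix) auto
      then show ?thesis using Nil not_stop by (auto simp: completes_def)
    next
      case (Cons y ys')
      have "pmf (run P x S (Suc k) t0) (t0 @ ys) =
          pmf (step_dist P x S t0) y * pmf (run P x S k (t0 @ [y])) ((t0 @ [y]) @ ys')"
        unfolding bind by (subst expectation_single_point[where y = y])
          (auto simp: Cons intro!: pmf_run_nonprefix)
      also note Suc.IH
      also have "completes P k (t0 @ [y]) ys' \<longleftrightarrow> completes P (Suc k) t0 ys"
        using not_stop unfolding completes_def Cons by (auto simp: less_Suc_eq_0_disj)
      moreover have "(\<Prod>j<length ys. pmf (step_dist P x S (t0 @ take j ys)) (ys ! j)) =
          pmf (step_dist P x S t0) y *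
          (\<Prod>j<length ys'. pmf (step_dist P x S ((t0 @ [y]) @ take j ys')) (ys' ! j))"
        unfolding Cons length_Cons prod.lessThan_Suc_shift by simp
      ultimately show ?thesis by simp
    qed
  qed
qed

lemma pmf_transcript:
  "pmf (transcript P x S) t =
     (if completes P (plength P) [] t then (\<Prod>j<length t. pmf (step_dist P x S (take j t)) (t ! j)) else 0)"
  using pmf_run[of P x S "plength P" "[]" t] by (simp add: transcript_def)

lemma transcript_no_knower: "transcript P x {} = transcript P y {}"
proof -
  have "run P x {} k t = run P y {} k t" for k t by (induction k arbitrary: t) auto
  then show ?thesis by (simp add: transcript_def)
qed

lemma finite_run_support:
  assumes "valid_protocol n P"
  shows "finite (set_pmf (run P x S k t))"
proof (induction k arbitrary: t)
  case 0 then show ?case by simp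
next
  case (Suc k)
  have "finite (set_pmf (p_know P t x))" "finite (set_pmf (p_unk P t))"
    using assms by (auto simp: valid_protocol_def)
  then show ?case using Suc by auto
qed

section \<open>Factorization over the players\<close>

definition complete_ind :: "protocol \<Rightarrow> nat list \<Rightarrow> real" where
  "complete_ind P t = (if completes P (plength P) [] t then 1 else 0)"

definition player_factor :: "protocol \<Rightarrow> nat \<Rightarrow> nat list \<Rightarrow> nat \<Rightarrow> bool \<Rightarrow> real" where
  "player_factor P x t i v = (\<Prod>j\<in>{j. j < length t \<and> speaker P (take j t) = i}.
      pmf (if v then p_know P (take j t) x else p_unk P (take j t)) (t ! j))"

lemma player_factor_nonneg: "0 \<le> player_factor P x t i v"
  unfolding player_factor_def by (intro prod_nonneg) auto

text \<open>Grouping the messages of the product formula by their sender.\<close>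
lemma transcript_factor:
  assumes "valid_protocol n P"
  shows "pmf (transcript P x S) t = complete_ind P t * (\<Prod>i<n. player_factor P x t i (i \<in> S))"
proof -
  have "(\<lambda>j. speaker P (take j t)) ` {..<length t} \<subseteq> {..<n}"
    using assms by (auto simp: valid_protocol_def)
  then have "(\<Prod>j<length t. pmf (step_dist P x S (take j t)) (t ! j)) =
      (\<Prod>i<n. \<Prod>j\<in>{j\<in>{..<length t}. speaker P (take j t) = i}. pmf (step_dist P x S (take j t)) (t ! j))"
    by (intro prod.group[symmetric]) auto
  also have "\<dots> = (\<Prod>i<n. player_factor P x t i (i \<in> S))"
    unfolding player_factor_def by (intro prod.cong refl) (auto simp: step_dist_def)
  finally show ?thesis by (simp add: pmf_transcript complete_ind_def)
qed

lemma indep_weight_prod: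
  assumes "S \<subseteq> {..<n}"
  shows "indep_weight n b S = (\<Prod>i<n. if i \<in> S then b else 1 - b)"
proof -
  have "(\<Prod>i<n. if i \<in> S then b else 1 - b) = (\<Prod>i\<in>S. b) * (\<Prod>i\<in>{..<n} - S. 1 - b)"
    using prod.If_cases[of "{..<n}" "\<lambda>i. i \<in> S" "\<lambda>_. b" "\<lambda>_. 1 - b"] assms
    by (simp add: Int_absorb1 Diff_eq[symmetric] Collect_mem_eq)
  also have "\<dots> = b ^ card S * (1 - b) ^ (n - card S)"
    using assms finite_subset[OF assms] by (simp add: card_Diff_subset)
  finally show ?thesis by (simp add: indep_weight_def)
qed

lemma sum_Pow_prod:
  fixes f g :: "'a \<Rightarrow> real"
  assumes "finite A"
  shows "(\<Sum>S\<in>Pow A. \<Prod>i\<in>A. if i \<in> S then f i else g i) = (\<Prod>i\<in>A. f i + g i)"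
proof -
  have "(\<Prod>i\<in>A. if i \<in> S then f i else g i) = (\<Prod>i\<in>S. f i) * (\<Prod>i\<in>A - S. g i)" if "S \<in> Pow A" for S
    using that prod.If_cases[of A "\<lambda>i. i \<in> S" f g] assms by (simp add: Diff_eq Int_absorb1)
  then show ?thesis using prod_add[OF assms, of f g] by simp
qed

lemma weight_times_prod:
  assumes "S \<subseteq> {..<n}"
  shows "indep_weight n b S * (C * (\<Prod>i<n. F i (i \<in> S))) =
    C * (\<Prod>i<n. if i \<in> S then b * F i True else (1 - b) * F i False)"
proof -
  have "(\<Prod>i<n. if i \<in> S then b else 1 - b) * (\<Prod>i<n. F i (i \<in> S)) =
    (\<Prod>i<n. if i \<in> S then b * F i True else (1 - b) * F i False)"
    by (subst prod.distrib[symmetric]) (intro prod.cong, auto)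
  then show ?thesis by (simp add: indep_weight_prod[OF assms] mult.left_commute)
qed

lemma trans_prob_factor:
  assumes "\<And>S. pmf (transcript P x S) t = C * (\<Prod>i<n. F i (i \<in> S))"
  shows "trans_prob n b P x t = C * (\<Prod>i<n. b * F i True + (1 - b) * F i False)"
proof -
  have "trans_prob n b P x t =
      (\<Sum>S\<in>Pow {..<n}. C * (\<Prod>i<n. if i \<in> S then b * F i True else (1 - b) * F i False))"
    unfolding trans_prob_def assms by (intro sum.cong refl weight_times_prod) auto
  then show ?thesis by (simp add: sum_distrib_left[symmetric] sum_Pow_prod)
qed

lemma knower_prob_factor:
  assumes fac: "\<And>S. pmf (transcript P x S) t = C * (\<Prod>i<n. F i (i \<in> S))" and i: "i < n"
  shows "(\<Sum>S\<in>{S\<in>Pow {..<n}. i \<in> S}. indep_weight n b S * pmf (transcript P x S) t)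
    = C * (b * F i True * (\<Prod>j\<in>{..<n} - {i}. b * F j True + (1 - b) * F j False))"
proof -
  define f where "f j = b * F j True" for j
  define g where "g = (\<lambda>j. (1 - b) * F j False)(i := 0)"
  have "(\<Sum>S\<in>{S\<in>Pow {..<n}. i \<in> S}. indep_weight n b S * pmf (transcript P x S) t)
     = (\<Sum>S\<in>Pow {..<n}. if i \<in> S then indep_weight n b S * pmf (transcript P x S) t else 0)"
    by (subst sum.inter_filter) auto
  also have "\<dots> = (\<Sum>S\<in>Pow {..<n}. C * (\<Prod>j<n. if j \<in> S then f j else g j))"
  proof (intro sum.cong refl)
    fix S assume S: "S \<in> Pow {..<n}"
    show "(if i \<in> S then indep_weight n b S * pmf (transcript P x S) t else 0) =
          C * (\<Prod>j<n. if j \<in> S then f j else g j)"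
    proof (cases "i \<in> S")
      case True
      then show ?thesis unfolding fac using weight_times_prod[of S n b C F] S
        by (auto simp: f_def g_def intro!: prod.cong)
    next
      case False
      have "(\<Prod>j<n. if j \<in> S then f j else g j) = 0"
        using False i by (intro prod_zero) (auto simp: g_def intro!: bexI[of _ i])
      then show ?thesis using False by simp
    qed
  qed
  also have "\<dots> = C * (\<Prod>j<n. f j + g j)"
    by (simp add: sum_distrib_left[symmetric] sum_Pow_prod)
  also have "(\<Prod>j<n. f j + g j) = (f i + g i) * (\<Prod>j\<in>{..<n} - {i}. f j + g j)"
    by (rule prod.remove) (use i in auto)
  also have "(\<Prod>j\<in>{..<n} - {i}. f j + g j) = (\<Prod>j\<in>{..<n} - {i}. b * F j True + (1 - b) * F j False)"
    by (intro prod.cong) (auto simp: f_def g_def)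
  finally show ?thesis by (simp add: f_def g_def)
qed

lemma posterior_factor:
  assumes fac: "\<And>S. pmf (transcript P x S) t = C * (\<Prod>i<n. F i (i \<in> S))" and i: "i < n"
  shows "posterior n b P x t i =
    (if C * (\<Prod>j<n. b * F j True + (1 - b) * F j False) = 0 then 0
     else b * F i True / (b * F i True + (1 - b) * F i False))"
proof -
  let ?h = "\<lambda>j. b * F j True + (1 - b) * F j False"
  have split: "(\<Prod>j<n. ?h j) = ?h i * (\<Prod>j\<in>{..<n} - {i}. ?h j)"
    by (rule prod.remove) (use i in auto)
  have tp: "trans_prob n b P x t = C * (\<Prod>j<n. ?h j)"
    by (rule trans_prob_factor[OF fac])
  show ?thesis
  proof (cases "C * (\<Prod>j<n. ?h j) = 0")
    case True
    then show ?thesis unfolding posterior_def tp by simp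
  next
    case False
    then have "C \<noteq> 0" "(\<Prod>j\<in>{..<n} - {i}. ?h j) \<noteq> 0" using split by auto
    then have "posterior n b P x t i = b * F i True / ?h i"
      unfolding posterior_def knower_prob_factor[OF fac i] tp split by simp
    then show ?thesis using False by simp
  qed
qed

lemma trans_prob_nonneg:
  assumes "0 \<le> b" "b \<le> 1"
  shows "0 \<le> trans_prob n b P x t"
  unfolding trans_prob_def indep_weight_def using assms by (intro sum_nonneg mult_nonneg_nonneg) auto

lemma cond_prob_sum:
  assumes "finite U" "\<And>S. S \<subseteq> {..<n} \<Longrightarrow> set_pmf (transcript P x S) \<subseteq> U"
  shows "cond_prob n b P x Q = (\<Sum>t\<in>{t\<in>U. Q t}. trans_prob n b P x t)"
proof -
  have "measure_pmf.prob (transcript P x S) {t. Q t} = (\<Sum>t\<in>{t\<in>U. Q t}. pmf (transcript P x S) t)"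
    if S: "S \<subseteq> {..<n}" for S
  proof -
    have "measure_pmf.prob (transcript P x S) {t. Q t} =
        measure_pmf.prob (transcript P x S) ({t. Q t} \<inter> set_pmf (transcript P x S))"
      by (simp add: measure_Int_set_pmf)
    also have "{t. Q t} \<inter> set_pmf (transcript P x S) = {t\<in>U. Q t} \<inter> set_pmf (transcript P x S)"
      using assms(2)[OF S] by auto
    also have "measure_pmf.prob (transcript P x S) \<dots> = measure_pmf.prob (transcript P x S) {t\<in>U. Q t}"
      by (simp add: measure_Int_set_pmf)
    also have "\<dots> = (\<Sum>t\<in>{t\<in>U. Q t}. pmf (transcript P x S) t)"
      using assms(1) by (simp add: measure_measure_pmf_finite)
    finally show ?thesis .
  qed
  then have "cond_prob n b P x Q =
      (\<Sum>S\<in>Pow {..<n}. \<Sum>t\<in>{t\<in>U. Q t}. indep_weight n b S * pmf (transcript P x S) t)"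
    unfolding cond_prob_def by (auto simp: sum_distrib_left intro!: sum.cong)
  also have "\<dots> = (\<Sum>t\<in>{t\<in>U. Q t}. trans_prob n b P x t)"
    unfolding trans_prob_def by (rule sum.swap)
  finally show ?thesis .
qed

lemma one_in_secret_set: "1 \<in> secret_set h"
  by (simp add: secret_set_def)

lemma finite_secret_set: "finite (secret_set h)"
  by (simp add: secret_set_def)

lemma card_secret_set: "card (secret_set h) = 2 ^ nat \<lceil>h\<rceil>"
  by (simp add: secret_set_def)

section \<open>Converse: an upper bound on safely achievable rates\<close>

definition tilt_ignorant :: "real \<Rightarrow> real \<Rightarrow> real" where
  "tilt_ignorant b s = exp (s * ln (1 - b))"

definition tilt_knower :: "real \<Rightarrow> real \<Rightarrow> real \<Rightarrow> real" where
  "tilt_knower b c s = tilt_ignorant b s * (1 + (exp (- s * ln (1 - c)) - 1) / c)"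

definition tilted_mass :: "real \<Rightarrow> real \<Rightarrow> real \<Rightarrow> real" where
  "tilted_mass b c s = tilt_knower b c s * b + tilt_ignorant b s * (1 - b)"

text \<open>Since (1 - c)^(-s) \<ge> 1, the knower weight is nonnegative.\<close>
lemma tilt_knower_nonneg:
  assumes "0 < c" "c < 1" "0 \<le> s"
  shows "0 \<le> tilt_knower b c s"
proof -
  have "s * ln (1 - c) \<le> 0" using assms by (intro mult_nonneg_nonpos) auto
  then have "1 \<le> exp (- s * ln (1 - c))" by simp
  then show ?thesis using assms by (simp add: tilt_knower_def tilt_ignorant_def)
qed

lemma exp_convex_ineq:
  fixes l u :: real
  assumes "0 \<le> l" "l \<le> 1"
  shows "exp (l * u) \<le> 1 - l + l * exp u"
  using convex_onD[where f=exp and A=UNIV and t=l and x=0 and y=u] exp_convex assms by simp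

text \<open>Convexity of p \<mapsto> (1 - p)^(-s): on [0, c] it lies below its chord.\<close>
lemma neg_power_le_chord:
  fixes c s p :: real
  assumes "0 < c" "c < 1" "0 \<le> p" "p \<le> c" "0 \<le> s"
  shows "exp (- s * ln (1 - p)) \<le> 1 + (p / c) * (exp (- s * ln (1 - c)) - 1)"
proof -
  define l where "l = p / c"
  have l: "0 \<le> l" "l \<le> 1" using assms by (auto simp: l_def)
  have p: "p = l * c" using assms by (simp add: l_def)
  have "exp (l * ln (1 - c)) \<le> 1 - l + l * exp (ln (1 - c))" by (rule exp_convex_ineq[OF l])
  also have "\<dots> = 1 - p" using assms by (simp add: p algebra_simps)
  finally have "l * ln (1 - c) \<le> ln (1 - p)"
    using assms by (metis diff_gt_0_iff_gt exp_gt_zero ln_exp ln_le_cancel_iff order.strict_trans1)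
  from mult_left_mono[OF this assms(5)]
  have "- s * ln (1 - p) \<le> l * (- s * ln (1 - c))" by (simp add: algebra_simps)
  then have "exp (- s * ln (1 - p)) \<le> exp (l * (- s * ln (1 - c)))" by simp
  also have "\<dots> \<le> 1 - l + l * exp (- s * ln (1 - c))" by (rule exp_convex_ineq[OF l])
  finally show ?thesis by (simp add: l_def algebra_simps)
qed

lemma tilted_factor_bound:
  fixes a d b c s :: real
  assumes b: "0 < b" "b < c" "c < 1" and s: "0 < s"
    and a: "0 \<le> a" "0 < a + d" "a \<le> c * (a + d)"
  shows "(a + d) * exp (s * (ln (1 - b) + ln (a + d) - ln d)) \<le> tilt_knower b c s * a + tilt_ignorant b s * d"
proof -
  define p where "p = a / (a + d)"
  define Kc where "Kc = exp (- s * ln (1 - c))"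
  have d: "0 < d" using a b by (smt (verit) mult_less_cancel_right2)
  have p: "0 \<le> p" "p \<le> c" using a by (auto simp: p_def divide_le_eq mult.commute)
  have "1 - p = d / (a + d)" using a by (simp add: p_def field_simps)
  then have lnp: "ln (1 - p) = ln d - ln (a + d)" using a d by (simp add: ln_div)
  have "s * (ln (1 - b) + ln (a + d) - ln d) = s * ln (1 - b) + - s * ln (1 - p)"
    unfolding lnp by (simp add: algebra_simps)
  then have "exp (s * (ln (1 - b) + ln (a + d) - ln d)) = tilt_ignorant b s * exp (- s * ln (1 - p))"
    by (metis exp_add tilt_ignorant_def)
  also have "\<dots> \<le> tilt_ignorant b s * (1 + (p / c) * (Kc - 1))"
    using neg_power_le_chord[OF _ b(3) p] b s by (simp add: Kc_def tilt_ignorant_def)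
  finally have "(a + d) * exp (s * (ln (1 - b) + ln (a + d) - ln d)) \<le>
      (a + d) * (tilt_ignorant b s * (1 + (p / c) * (Kc - 1)))"
    using a by (intro mult_left_mono) auto
  also have "\<dots> = tilt_ignorant b s * (a + d) + tilt_ignorant b s * ((a + d) * p) * (Kc - 1) / c"
    by (simp add: algebra_simps)
  also have "(a + d) * p = a" using a by (simp add: p_def)
  also have "tilt_ignorant b s * (a + d) + tilt_ignorant b s * a * (Kc - 1) / c =
      tilt_knower b c s * a + tilt_ignorant b s * d"
    using b by (simp add: Kc_def tilt_knower_def field_simps)
  finally show ?thesis .
qed

lemma tilted_prod_bound:
  fixes a d :: "nat \<Rightarrow> real"
  assumes b: "0 < b" "b < c" "c < 1" and s: "0 < s"
    and ad: "\<And>i. i < n \<Longrightarrow> 0 \<le> a i \<and> 0 < a i + d i \<and> a i \<le> c * (a i + d i)"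
  shows "(\<Prod>i<n. a i + d i) * exp (s * (ln (\<Prod>i<n. a i + d i) - ln (\<Prod>i<n. d i / (1 - b))))
    \<le> (\<Prod>i<n. tilt_knower b c s * a i + tilt_ignorant b s * d i)"
proof -
  have d: "0 < d i" if "i < n" for i
    using ad[OF that] b by (smt (verit) mult_less_cancel_right2)
  have "ln (\<Prod>i<n. a i + d i) = (\<Sum>i<n. ln (a i + d i))"
    using ad by (intro ln_prod) (auto dest!: ad)
  moreover have "ln (\<Prod>i<n. d i / (1 - b)) = (\<Sum>i<n. ln (d i) - ln (1 - b))"
    using d b by (subst ln_prod) (auto intro!: sum.cong simp: ln_div, (metis d less_irrefl)+)
  ultimately have "ln (\<Prod>i<n. a i + d i) - ln (\<Prod>i<n. d i / (1 - b)) =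
      (\<Sum>i<n. ln (1 - b) + ln (a i + d i) - ln (d i))"
    by (simp add: sum_subtractf[symmetric] algebra_simps)
  then have "(\<Prod>i<n. a i + d i) * exp (s * (ln (\<Prod>i<n. a i + d i) - ln (\<Prod>i<n. d i / (1 - b)))) =
      (\<Prod>i<n. (a i + d i) * exp (s * (ln (1 - b) + ln (a i + d i) - ln (d i))))"
    by (simp add: sum_distrib_left exp_sum prod.distrib)
  also have "\<dots> \<le> (\<Prod>i<n. tilt_knower b c s * a i + tilt_ignorant b s * d i)"
  proof (intro prod_mono conjI)
    fix i assume "i \<in> {..<n}"
    then have i: "0 \<le> a i" "0 < a i + d i" "a i \<le> c * (a i + d i)" using ad by auto
    show "0 \<le> (a i + d i) * exp (s * (ln (1 - b) + ln (a i + d i) - ln (d i)))" using i by simp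
    show "(a i + d i) * exp (s * (ln (1 - b) + ln (a i + d i) - ln (d i))) \<le>
        tilt_knower b c s * a i + tilt_ignorant b s * d i"
      by (rule tilted_factor_bound[OF b s i])
  qed
  finally show ?thesis .
qed

lemma markov_split:
  fixes T q A s G :: real
  assumes "0 < A" "0 < s" "0 \<le> q" "0 \<le> G"
    and tilted: "0 < T \<Longrightarrow> 0 < q \<and> T * exp (s * (ln T - ln q)) \<le> G"
  shows "T \<le> A * q + exp (- s * ln A) * G"
proof (cases "T \<le> A * q")
  case True
  then show ?thesis using assms by (smt (verit) exp_gt_zero mult_nonneg_nonneg)
next
  case False
  then have T: "0 < T" using assms by (smt (verit) mult_nonneg_nonneg)
  with tilted have q: "0 < q" and G: "T * exp (s * (ln T - ln q)) \<le> G" by auto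
  have "ln (A * q) < ln T" using False assms q T by simp
  then have "ln A + ln q < ln T" using assms q by (simp add: ln_mult)
  then have "s * (ln A + ln q) \<le> s * ln T" using assms by (intro mult_left_mono) auto
  then have "T \<le> T * (exp (- s * ln A) * exp (s * (ln T - ln q)))"
    using T by (simp add: exp_add[symmetric] algebra_simps)
  also have "\<dots> \<le> exp (- s * ln A) * G" using G by (simp add: algebra_simps)
  finally show ?thesis using assms by (smt (verit) mult_nonneg_nonneg)
qed

definition tilted_weight :: "nat \<Rightarrow> real \<Rightarrow> real \<Rightarrow> real \<Rightarrow> protocol \<Rightarrow> nat \<Rightarrow> nat list \<Rightarrow> real" where
  "tilted_weight n b c s P x t = complete_ind P t *
     (\<Prod>i<n. tilt_knower b c s * (b * player_factor P x t i True)
             + tilt_ignorant b s * ((1 - b) * player_factor P x t i False))"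

lemma tilted_weight_nonneg:
  assumes "0 < b" "b < c" "c < 1" "0 \<le> s"
  shows "0 \<le> tilted_weight n b c s P x t"
  using assms tilt_knower_nonneg[of c s b]
  by (auto simp: tilted_weight_def complete_ind_def tilt_ignorant_def
      intro!: prod_nonneg add_nonneg_nonneg mult_nonneg_nonneg player_factor_nonneg)

lemma trans_prob_split:
  assumes b: "0 < b" "b < c" "c < 1" and s: "0 < s" and A: "0 < A"
    and valid: "valid_protocol n P"
    and post: "trans_prob n b P x t > 0 \<Longrightarrow> \<forall>i<n. posterior n b P x t i \<le> c"
  shows "trans_prob n b P x t \<le> A * pmf (transcript P x {}) t + exp (- s * ln A) * tilted_weight n b c s P x t"
proof (rule markov_split[OF A s pmf_nonneg tilted_weight_nonneg[OF b less_imp_le[OF s]]])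
  define a where "a i = b * player_factor P x t i True" for i
  define d where "d i = (1 - b) * player_factor P x t i False" for i
  have fac: "pmf (transcript P x S) t = complete_ind P t * (\<Prod>i<n. player_factor P x t i (i \<in> S))" for S
    by (rule transcript_factor[OF valid])
  have Tp: "trans_prob n b P x t = complete_ind P t * (\<Prod>i<n. a i + d i)"
    using trans_prob_factor[OF fac] by (simp add: a_def d_def)
  assume pos: "0 < trans_prob n b P x t"
  then have C1: "complete_ind P t = 1" using Tp by (auto simp: complete_ind_def split: if_splits)
  have ad: "0 \<le> a i \<and> 0 < a i + d i \<and> a i \<le> c * (a i + d i)" if i: "i < n" for i
  proof -
    have nonneg: "0 \<le> a i" "0 \<le> d i" using b by (auto simp: a_def d_def player_factor_nonneg)
    have ne: "complete_ind P t * (\<Prod>i<n. a i + d i) \<noteq> 0" using pos Tp by (metis order_less_irrefl)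
    then have "a i + d i \<noteq> 0" using i by (metis finite_lessThan lessThan_iff mult_zero_right prod_zero_iff)
    then have sum_pos: "0 < a i + d i" using nonneg by linarith
    have "posterior n b P x t i = a i / (a i + d i)"
      using posterior_factor[OF fac i, of b] ne unfolding a_def d_def by (simp only: if_False)
    moreover have "posterior n b P x t i \<le> c" using post[OF pos] i by blast
    ultimately have "a i / (a i + d i) \<le> c" by simp
    then show ?thesis using nonneg sum_pos by (simp add: divide_le_eq)
  qed
  have q: "pmf (transcript P x {}) t = (\<Prod>i<n. d i / (1 - b))"
    using fac[of "{}"] C1 b by (simp add: d_def)
  have "0 < d i / (1 - b)" if "i < n" for i
    using ad[OF that] b by (smt (verit) divide_pos_pos mult_less_cancel_right2)
  then have "0 < pmf (transcript P x {}) t" unfolding q by (intro prod_pos) auto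
  moreover have "trans_prob n b P x t * exp (s * (ln (trans_prob n b P x t) - ln (pmf (transcript P x {}) t)))
      \<le> tilted_weight n b c s P x t"
    using tilted_prod_bound[OF b s ad] unfolding Tp q C1 tilted_weight_def by (simp add: a_def d_def)
  ultimately show "0 < pmf (transcript P x {}) t \<and>
      trans_prob n b P x t * exp (s * (ln (trans_prob n b P x t) - ln (pmf (transcript P x {}) t)))
      \<le> tilted_weight n b c s P x t" by blast
qed

text \<open>The tilted weights of all transcripts sum to Lambda^n: expand the product over players
  as a sum over the set of knowers and use that each transcript distribution has mass one.\<close>
lemma sum_weighted_transcripts:
  fixes \<mu>0 \<mu>1 b :: real
  assumes valid: "valid_protocol n P" and U: "finite U" "\<And>S. S \<subseteq> {..<n} \<Longrightarrow> set_pmf (transcript P x S) \<subseteq> U"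
  shows "(\<Sum>t\<in>U. complete_ind P t *
      (\<Prod>i<n. \<mu>1 * (b * player_factor P x t i True) + \<mu>0 * ((1 - b) * player_factor P x t i False)))
     = (\<mu>1 * b + \<mu>0 * (1 - b)) ^ n"
proof -
  define co where "co S = (\<Prod>i<n. if i \<in> S then \<mu>1 else \<mu>0)" for S :: "nat set"
  have fac: "pmf (transcript P x S) t = complete_ind P t * (\<Prod>i<n. player_factor P x t i (i \<in> S))" for S t
    by (rule transcript_factor[OF valid])
  have pointwise: "complete_ind P t *
      (\<Prod>i<n. \<mu>1 * (b * player_factor P x t i True) + \<mu>0 * ((1 - b) * player_factor P x t i False))
      = (\<Sum>S\<in>Pow {..<n}. co S * (indep_weight n b S * pmf (transcript P x S) t))" for t
  proof -
    have "co S * (indep_weight n b S * pmf (transcript P x S) t) = complete_ind P t *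
        (\<Prod>i<n. if i \<in> S then \<mu>1 * (b * player_factor P x t i True)
                else \<mu>0 * ((1 - b) * player_factor P x t i False))" if "S \<in> Pow {..<n}" for S
    proof -
      let ?F = "player_factor P x t"
      have "(\<Prod>i<n. if i \<in> S then \<mu>1 else \<mu>0) *
          (\<Prod>i<n. if i \<in> S then b * ?F i True else (1 - b) * ?F i False) =
          (\<Prod>i<n. if i \<in> S then \<mu>1 * (b * ?F i True) else \<mu>0 * ((1 - b) * ?F i False))"
        by (subst prod.distrib[symmetric]) (intro prod.cong, auto)
      then show ?thesis
        using that unfolding fac co_def by (simp add: weight_times_prod mult.left_commute)
    qed
    then show ?thesis by (simp add: sum_distrib_left[symmetric] sum_Pow_prod)
  qed
  have "(\<Sum>t\<in>U. \<Sum>S\<in>Pow {..<n}. co S * (indep_weight n b S * pmf (transcript P x S) t))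
      = (\<Sum>S\<in>Pow {..<n}. co S * indep_weight n b S * (\<Sum>t\<in>U. pmf (transcript P x S) t))"
    by (subst sum.swap) (simp add: sum_distrib_left mult.assoc)
  also have "\<dots> = (\<Sum>S\<in>Pow {..<n}. co S * indep_weight n b S)"
    using U by (intro sum.cong refl) (simp add: sum_pmf_eq_1)
  also have "\<dots> = (\<Sum>S\<in>Pow {..<n}. \<Prod>i<n. if i \<in> S then \<mu>1 * b else \<mu>0 * (1 - b))"
    unfolding co_def by (intro sum.cong refl, subst indep_weight_prod, simp,
        subst prod.distrib[symmetric], intro prod.cong) auto
  also have "\<dots> = (\<mu>1 * b + \<mu>0 * (1 - b)) ^ n" by (simp add: sum_Pow_prod)
  finally show ?thesis by (simp add: pointwise)
qed

lemma sum_tilted_weight: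
  assumes "valid_protocol n P" "finite U" "\<And>S. S \<subseteq> {..<n} \<Longrightarrow> set_pmf (transcript P x S) \<subseteq> U"
  shows "(\<Sum>t\<in>U. tilted_weight n b c s P x t) = tilted_mass b c s ^ n"
  unfolding tilted_weight_def tilted_mass_def by (rule sum_weighted_transcripts[OF assms])

text \<open>Decoding regions of distinct secrets are disjoint.\<close>
lemma sum_decoding_regions:
  fixes q :: "'t \<Rightarrow> real"
  assumes "finite X" "finite U" "\<And>t. 0 \<le> q t"
  shows "(\<Sum>x\<in>X. \<Sum>t\<in>{t\<in>U. D t = x}. q t) \<le> (\<Sum>t\<in>U. q t)"
proof -
  have "(\<Sum>x\<in>X. \<Sum>t\<in>{t\<in>U. D t = x}. q t) = (\<Sum>x\<in>X. \<Sum>t\<in>U. if D t = x then q t else 0)"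
    using assms by (intro sum.cong refl sum.inter_filter)
  also have "\<dots> = (\<Sum>t\<in>U. \<Sum>x\<in>X. if D t = x then q t else 0)" by (rule sum.swap)
  also have "\<dots> = (\<Sum>t\<in>U. if D t \<in> X then q t else 0)"
    using assms by (intro sum.cong refl) (simp add: sum.delta)
  also have "\<dots> \<le> (\<Sum>t\<in>U. q t)" using assms by (intro sum_mono) auto
  finally show ?thesis .
qed

text \<open>For a single secret x: the decoding region of x carries probability at least 1 - \<epsilon>,
  which by the pointwise split is at most A times its no-knower probability plus A^(-s) Lambda^n.\<close>
lemma decoding_region_bound:
  assumes b: "0 < b" "b < c" "c < 1" and s: "0 < s" and A: "0 < A"
    and safe: "safe_protocol n h b c \<epsilon> P D" and x: "x \<in> secret_set h"
    and U: "finite U" "\<And>S. S \<subseteq> {..<n} \<Longrightarrow> set_pmf (transcript P x S) \<subseteq> U"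
  shows "1 - \<epsilon> \<le> A * (\<Sum>t\<in>{t\<in>U. D t = x}. pmf (transcript P x {}) t)
                   + exp (- s * ln A) * tilted_mass b c s ^ n"
proof -
  let ?Q = "\<lambda>t. (\<forall>i<n. posterior n b P x t i \<le> c) \<and> D t = x"
  let ?G = "tilted_weight n b c s P x"
  have valid: "valid_protocol n P" using safe by (simp add: safe_protocol_def risky_protocol_def)
  have "1 - \<epsilon> \<le> cond_prob n b P x ?Q"
    using safe x unfolding safe_protocol_def risky_protocol_def by blast
  also have "\<dots> = (\<Sum>t\<in>{t\<in>U. ?Q t}. trans_prob n b P x t)"
    by (rule cond_prob_sum[OF U])
  also have "\<dots> \<le> (\<Sum>t\<in>{t\<in>U. D t = x}. trans_prob n b P x t)"
    using U b by (intro sum_mono2 trans_prob_nonneg) auto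
  also have "\<dots> \<le> (\<Sum>t\<in>{t\<in>U. D t = x}. A * pmf (transcript P x {}) t + exp (- s * ln A) * ?G t)"
  proof (intro sum_mono trans_prob_split[OF b s A valid])
    fix t assume "0 < trans_prob n b P x t"
    then show "\<forall>i<n. posterior n b P x t i \<le> c"
      using safe x unfolding safe_protocol_def by blast
  qed
  also have "\<dots> = A * (\<Sum>t\<in>{t\<in>U. D t = x}. pmf (transcript P x {}) t)
                  + exp (- s * ln A) * (\<Sum>t\<in>{t\<in>U. D t = x}. ?G t)"
    by (simp add: sum.distrib sum_distrib_left)
  also have "(\<Sum>t\<in>{t\<in>U. D t = x}. ?G t) \<le> (\<Sum>t\<in>U. ?G t)"
    using U tilted_weight_nonneg[OF b] s by (intro sum_mono2) auto
  also have "(\<Sum>t\<in>U. ?G t) = tilted_mass b c s ^ n"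
    by (rule sum_tilted_weight[OF valid U])
  finally show ?thesis by (simp add: mult_left_mono)
qed

lemma converse_bound:
  assumes b: "0 < b" "b < c" "c < 1" and s: "0 < s" and A: "0 < A"
    and safe: "safe_protocol n h b c \<epsilon> P D"
  shows "real (card (secret_set h)) * (1 - \<epsilon>) \<le>
      A + real (card (secret_set h)) * (exp (- s * ln A) * tilted_mass b c s ^ n)"
proof -
  define X where "X = secret_set h"
  have valid: "valid_protocol n P" using safe by (simp add: safe_protocol_def risky_protocol_def)
  define U where "U = (\<Union>x\<in>X. \<Union>S\<in>Pow {..<n}. set_pmf (transcript P x S))"
  have U: "finite U" unfolding U_def X_def transcript_def
    by (intro finite_UN_I finite_secret_set finite_run_support[OF valid]) auto
  have supp: "\<And>S. S \<subseteq> {..<n} \<Longrightarrow> set_pmf (transcript P x S) \<subseteq> U" if "x \<in> X" for x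
    using that unfolding U_def by blast
  define q where "q = pmf (transcript P 1 {})"
  have q: "pmf (transcript P x {}) = q" for x
    unfolding q_def by (metis transcript_no_knower)
  have "(\<Sum>x\<in>X. 1 - \<epsilon>) \<le>
      (\<Sum>x\<in>X. A * (\<Sum>t\<in>{t\<in>U. D t = x}. q t) + exp (- s * ln A) * tilted_mass b c s ^ n)"
    using decoding_region_bound[OF b s A safe _ U supp] unfolding q X_def by (intro sum_mono) auto
  also have "\<dots> = A * (\<Sum>x\<in>X. \<Sum>t\<in>{t\<in>U. D t = x}. q t) + real (card X) * (exp (- s * ln A) * tilted_mass b c s ^ n)"
    by (simp add: sum.distrib sum_distrib_left)
  also have "(\<Sum>x\<in>X. \<Sum>t\<in>{t\<in>U. D t = x}. q t) \<le> (\<Sum>t\<in>U. q t)"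
    using U by (intro sum_decoding_regions) (auto simp: X_def finite_secret_set q_def)
  also have "(\<Sum>t\<in>U. q t) = 1"
    unfolding q_def using one_in_secret_set[of h] by (intro sum_pmf_eq_1[OF U]) (auto simp: X_def supp)
  finally show ?thesis using A unfolding X_def by (simp add: mult_left_mono)
qed

text \<open>Lambda(s) = (1 - b)^s (1 + b((1 - c)^(-s) - 1)/c) is positive; the derivative of its
  logarithm at 0 gives the capacity.\<close>
lemma ln_tilted_mass:
  assumes b: "0 < b" "b < c" "c < 1" and s: "0 \<le> s"
  shows "0 < tilted_mass b c s"
    and "ln (tilted_mass b c s) = s * ln (1 - b) + ln (1 + b * (exp (- s * ln (1 - c)) - 1) / c)"
proof -
  have "s * ln (1 - c) \<le> 0" using b s by (intro mult_nonneg_nonpos) auto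
  then have "0 < 1 + b * (exp (- s * ln (1 - c)) - 1) / c" using b by (simp add: add_pos_nonneg)
  moreover have "tilted_mass b c s = exp (s * ln (1 - b)) * (1 + b * (exp (- s * ln (1 - c)) - 1) / c)"
    using b by (simp add: tilted_mass_def tilt_knower_def tilt_ignorant_def field_simps)
  ultimately show "0 < tilted_mass b c s"
    and "ln (tilted_mass b c s) = s * ln (1 - b) + ln (1 + b * (exp (- s * ln (1 - c)) - 1) / c)"
    by (simp_all add: ln_mult)
qed

text \<open>Every safely achievable rate satisfies R s ln 2 \<le> ln Lambda(s) for all s > 0: take
  \<epsilon> = 1/4 and A = M/4 in the converse bound, so that 1/2 \<le> (M/4)^(-s) Lambda^n with M \<ge> 2^(nR),
  which fails for large n if the inequality is violated.\<close>
lemma achievable_tilted_bound: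
  assumes b: "0 < b" "b < c" "c < 1" and s: "0 < s" and ach: "safely_achievable b c R"
  shows "s * R * ln 2 \<le> ln (tilted_mass b c s)"
proof (rule ccontr)
  define \<Lambda> where "\<Lambda> = tilted_mass b c s"
  have \<Lambda>: "0 < \<Lambda>" unfolding \<Lambda>_def using ln_tilted_mass(1)[OF b] s by simp
  assume "\<not> ?thesis"
  then have gap: "0 < s * R * ln 2 - ln \<Lambda>" unfolding \<Lambda>_def by simp
  define n0 where "n0 = nat \<lceil>(2 * s * ln 2 + ln 2) / (s * R * ln 2 - ln \<Lambda>)\<rceil> + 1"
  obtain n P D where n: "n \<ge> n0" and safe: "safe_protocol n (real n * R) b c (1/4) P D"
    using ach unfolding safely_achievable_def by (meson zero_less_divide_1_iff zero_less_numeral)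
  define k where "k = nat \<lceil>real n * R\<rceil>"
  define M where "M = real (card (secret_set (real n * R)))"
  have M: "M = 2 ^ k" by (simp add: M_def k_def card_secret_set)
  have kn: "real n * R \<le> real k" unfolding k_def by linarith
  have A: "0 < M / 4" by (simp add: M)
  from converse_bound[OF b s A safe]
  have "M * (1 - 1/4) \<le> M / 4 + M * (exp (- s * ln (M / 4)) * \<Lambda> ^ n)"
    unfolding M_def \<Lambda>_def by simp
  then have "1/2 \<le> exp (- s * ln (M / 4)) * \<Lambda> ^ n" unfolding M by (simp add: field_simps)
  also have "\<dots> = exp (- s * ln (M / 4) + real n * ln \<Lambda>)"
  proof -
    have "exp (real n * ln \<Lambda>) = \<Lambda> ^ n" using \<Lambda> by (simp add: exp_of_nat_mult)
    then show ?thesis unfolding exp_add by simp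
  qed
  finally have "ln (1/2) \<le> - s * ln (M / 4) + real n * ln \<Lambda>"
    by (subst ln_exp[symmetric], subst ln_le_cancel_iff) auto
  moreover have "ln (M / 4) = real k * ln 2 - 2 * ln 2"
    unfolding M by (simp add: ln_div ln_realpow ln_realpow[of 2 2, simplified])
  ultimately have "- ln 2 \<le> - s * (real k * ln 2 - 2 * ln 2) + real n * ln \<Lambda>"
    by (simp add: ln_div)
  moreover have "s * (real n * R) * ln 2 \<le> s * real k * ln 2"
    using kn s by (intro mult_right_mono mult_left_mono) auto
  ultimately have "real n * (s * R * ln 2 - ln \<Lambda>) \<le> 2 * s * ln 2 + ln 2"
    by (simp add: algebra_simps)
  moreover have "(2 * s * ln 2 + ln 2) / (s * R * ln 2 - ln \<Lambda>) < real n"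
    using n unfolding n0_def by linarith
  ultimately show False using gap by (simp add: divide_less_eq algebra_simps)
qed

definition capacity_value :: "real \<Rightarrow> real \<Rightarrow> real" where
  "capacity_value b c = (- b * log 2 (1 - c) + c * log 2 (1 - b)) / c"

lemma capacity_value_ln:
  assumes "0 < b" "b < c" "c < 1"
  shows "capacity_value b c * ln 2 = ln (1 - b) - b * ln (1 - c) / c"
  using assms by (simp add: capacity_value_def log_def field_simps)

text \<open>The converse: ln Lambda(s) / s tends to the derivative ln(1 - b) - b ln(1 - c)/c of
  ln Lambda at 0, which is the capacity value times ln 2.\<close>
lemma achievable_le_capacity:
  assumes b: "0 < b" "b < c" "c < 1" and ach: "safely_achievable b c R"
  shows "R \<le> capacity_value b c"
proof -
  define \<psi> where "\<psi> s = s * ln (1 - b) + ln (1 + b * (exp (- s * ln (1 - c)) - 1) / c)" for s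
  define D0 where "D0 = ln (1 - b) - b * ln (1 - c) / c"
  have "(\<psi> has_real_derivative D0) (at 0)"
    unfolding \<psi>_def D0_def using b by (auto intro!: derivative_eq_intros simp: field_simps)
  then have "((\<lambda>y. (\<psi> y - \<psi> 0) / (y - 0)) \<longlongrightarrow> D0) (at 0)"
    by (simp add: has_field_derivative_iff)
  then have "((\<lambda>y. \<psi> y / y) \<longlongrightarrow> D0) (at 0)" by (simp add: \<psi>_def)
  then have "((\<lambda>y. \<psi> y / y) \<longlongrightarrow> D0) (at_right 0)"
    by (rule tendsto_mono[rotated]) (simp add: at_le)
  moreover have "eventually (\<lambda>y. R * ln 2 \<le> \<psi> y / y) (at_right 0)"
    unfolding eventually_at_right_less[of 0]
  proof (rule eventually_mono[OF eventually_at_right_less])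
    fix y :: real assume y: "0 < y"
    have "y * R * ln 2 \<le> \<psi> y"
      using achievable_tilted_bound[OF b y ach] ln_tilted_mass(2)[OF b] y by (simp add: \<psi>_def)
    then show "R * ln 2 \<le> \<psi> y / y" using y by (simp add: le_divide_eq algebra_simps)
  qed
  ultimately have "R * ln 2 \<le> D0" by (rule tendsto_lowerbound) simp
  then have "R * ln 2 \<le> capacity_value b c * ln 2" using capacity_value_ln[OF b] by (simp add: D0_def)
  then show ?thesis by (rule mult_right_le_imp_le) simp
qed

section \<open>Achievability: cyclic windows\<close>

text \<open>A knowing player with codeword symbol u sends a uniform element of the window of K
  consecutive residues mod N starting at u mod N; window_offset is the cyclic position of m
  relative to the window start.\<close>
definition window_offset :: "nat \<Rightarrow> nat \<Rightarrow> nat \<Rightarrow> nat" where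
  "window_offset N u m = (m + (N - u mod N)) mod N"

definition in_window :: "nat \<Rightarrow> nat \<Rightarrow> nat \<Rightarrow> nat \<Rightarrow> bool" where
  "in_window N K u m \<longleftrightarrow> m < N \<and> window_offset N u m < K"

lemma mod_eq_close:
  fixes x y N :: nat
  assumes "x mod N = y mod N" "x < y + N" "y < x + N"
  shows "x = y"
proof (rule ccontr)
  assume "x \<noteq> y"
  have "int N dvd int x - int y"
    using assms(1) by (metis mod_eq_dvd_iff of_nat_mod)
  then have "\<bar>int N\<bar> \<le> \<bar>int x - int y\<bar>" using \<open>x \<noteq> y\<close> by (intro dvd_imp_le_int) auto
  then show False using assms(2,3) by linarith
qed

lemma bij_translate_mod:
  fixes N k :: nat
  assumes "0 < N"
  shows "bij_betw (\<lambda>m. (m + k) mod N) {..<N} {..<N}"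
proof -
  have "inj_on (\<lambda>m. (m + k) mod N) {..<N}"
  proof (rule inj_onI)
    fix m1 m2 assume "m1 \<in> {..<N}" "m2 \<in> {..<N}" "(m1 + k) mod N = (m2 + k) mod N"
    then show "m1 = m2" using mod_eq_close[of "m1 + k" N "m2 + k"] by auto
  qed
  moreover have "(\<lambda>m. (m + k) mod N) ` {..<N} \<subseteq> {..<N}" using assms by auto
  ultimately show ?thesis unfolding bij_betw_def using endo_inj_surj[of "{..<N}"] by blast
qed

lemma bij_reflect_mod:
  fixes N m :: nat
  assumes "0 < N"
  shows "bij_betw (\<lambda>u. (m + (N - u)) mod N) {..<N} {..<N}"
proof -
  have "inj_on (\<lambda>u. (m + (N - u)) mod N) {..<N}"
  proof (rule inj_onI)
    fix u1 u2 assume "u1 \<in> {..<N}" "u2 \<in> {..<N}" "(m + (N - u1)) mod N = (m + (N - u2)) mod N"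
    then have "m + (N - u1) = m + (N - u2)" using mod_eq_close[of "m + (N - u1)" N "m + (N - u2)"] by auto
    then show "u1 = u2" using \<open>u1 \<in> {..<N}\<close> \<open>u2 \<in> {..<N}\<close> by auto
  qed
  moreover have "(\<lambda>u. (m + (N - u)) mod N) ` {..<N} \<subseteq> {..<N}" using assms by auto
  ultimately show ?thesis unfolding bij_betw_def using endo_inj_surj[of "{..<N}"] by blast
qed

lemma sum_lt_split:
  fixes g :: "bool \<Rightarrow> real"
  assumes "K \<le> N"
  shows "(\<Sum>e<N. g (e < K)) = real K * g True + (real N - real K) * g False"
proof -
  have "{..<N} = {..<K} \<union> {K..<N}" using assms by auto
  then have "(\<Sum>e<N. g (e < K)) = (\<Sum>e\<in>{..<K} \<union> {K..<N}. g (e < K))" by simp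
  also have "\<dots> = (\<Sum>e<K. g (e < K)) + (\<Sum>e\<in>{K..<N}. g (e < K))"
    by (rule sum.union_disjoint) auto
  also have "(\<Sum>e<K. g (e < K)) = (\<Sum>e<K. g True)" by (intro sum.cong) auto
  also have "(\<Sum>e\<in>{K..<N}. g (e < K)) = (\<Sum>e\<in>{K..<N}. g False)" by (intro sum.cong) auto
  also have "(\<Sum>e<K. g True) + (\<Sum>e\<in>{K..<N}. g False) = real K * g True + (real N - real K) * g False"
    using assms by (simp add: of_nat_diff)
  finally show ?thesis .
qed

lemma sum_window_over_messages:
  fixes g :: "bool \<Rightarrow> real"
  assumes "0 < N" "K \<le> N"
  shows "(\<Sum>m<N. g (in_window N K u m)) = real K * g True + (real N - real K) * g False"
proof -
  have "(\<Sum>m<N. g (in_window N K u m)) = (\<Sum>m<N. (\<lambda>e. g (e < K)) (window_offset N u m))"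
    by (intro sum.cong refl) (auto simp: in_window_def)
  also have "\<dots> = (\<Sum>e<N. g (e < K))"
    unfolding window_offset_def by (rule sum.reindex_bij_betw[OF bij_translate_mod[OF assms(1)]])
  finally show ?thesis using sum_lt_split[OF assms(2)] by simp
qed

lemma sum_window_over_centres:
  fixes g :: "bool \<Rightarrow> real"
  assumes "0 < N" "K \<le> N" "m < N"
  shows "(\<Sum>u<N. g (in_window N K u m)) = real K * g True + (real N - real K) * g False"
proof -
  have "(\<Sum>u<N. g (in_window N K u m)) = (\<Sum>u<N. (\<lambda>e. g (e < K)) ((m + (N - u)) mod N))"
    using assms(3) by (intro sum.cong refl) (auto simp: in_window_def window_offset_def)
  also have "\<dots> = (\<Sum>e<N. g (e < K))"
    unfolding window_offset_def by (rule sum.reindex_bij_betw[OF bij_reflect_mod[OF assms(1)]])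
  finally show ?thesis using sum_lt_split[OF assms(2)] by simp
qed

lemma card_window:
  assumes "0 < N" "K \<le> N"
  shows "card {m. in_window N K u m} = K"
proof -
  have e: "{m. in_window N K u m} = {m\<in>{..<N}. in_window N K u m}" by (auto simp: in_window_def)
  have "real (card {m\<in>{..<N}. in_window N K u m}) = (\<Sum>m<N. (\<lambda>v. if v then 1 else 0) (in_window N K u m))"
    by (simp add: sum.inter_filter[symmetric])
  also have "\<dots> = real K" using sum_window_over_messages[OF assms, of "\<lambda>v. if v then 1 else 0"] by simp
  finally show ?thesis using e by simp
qed

lemma window_centre: "0 < N \<Longrightarrow> 0 < K \<Longrightarrow> in_window N K u (u mod N)"
  by (simp add: in_window_def window_offset_def)

lemma finite_window: "finite {m. in_window N K u m}"
  by (rule finite_subset[of _ "{..<N}"]) (auto simp: in_window_def)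

definition window_protocol :: "nat \<Rightarrow> nat \<Rightarrow> nat \<Rightarrow> (nat \<Rightarrow> nat \<Rightarrow> nat) \<Rightarrow> protocol" where
  "window_protocol n N K a = \<lparr> stops = (\<lambda>t. n \<le> length t),
     speaker = (\<lambda>t. if length t < n then length t else 0),
     p_unk = (\<lambda>t. pmf_of_set {..<N}),
     p_know = (\<lambda>t x. pmf_of_set {m. in_window N K (a (length t) x) m}),
     plength = n \<rparr>"

definition window_factor :: "nat \<Rightarrow> nat \<Rightarrow> (nat \<Rightarrow> nat \<Rightarrow> nat) \<Rightarrow> nat \<Rightarrow> nat list \<Rightarrow> nat \<Rightarrow> bool \<Rightarrow> real" where
  "window_factor N K a x t j v = (if v then (if in_window N K (a j x) (t ! j) then 1 else 0) / real K
        else (if t ! j < N then 1 else 0) / real N)"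

lemma window_nonempty: "0 < N \<Longrightarrow> 0 < K \<Longrightarrow> {m. in_window N K u m} \<noteq> {}"
  using window_centre by blast

lemma window_protocol_valid:
  assumes "0 < n" "0 < N" "0 < K" "K \<le> N"
  shows "valid_protocol n (window_protocol n N K a)"
proof -
  have "{..<N} \<noteq> {}" using assms(2) by auto
  then show ?thesis
    unfolding valid_protocol_def window_protocol_def using assms window_nonempty[OF assms(2,3)] finite_window
    by (auto simp: set_pmf_of_set)
qed

lemma window_protocol_factor:
  assumes "0 < N" "0 < K" "K \<le> N"
  shows "pmf (transcript (window_protocol n N K a) x S) t =
      (if length t = n then 1 else 0) * (\<Prod>j<n. window_factor N K a x t j (j \<in> S))"
proof (cases "length t = n")
  case True
  have "{..<N} \<noteq> {}" using assms(1) by auto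
  then have "pmf (step_dist (window_protocol n N K a) x S (take j t)) (t ! j) = window_factor N K a x t j (j \<in> S)"
    if "j < n" for j
    using that True assms window_nonempty[OF assms(1,2)] finite_window card_window[OF assms(1,3)]
    by (auto simp: step_dist_def window_protocol_def window_factor_def pmf_of_set indicator_def)
  then show ?thesis
    using True by (simp add: pmf_transcript completes_def window_protocol_def)
next
  case False
  then show ?thesis by (auto simp: pmf_transcript completes_def window_protocol_def)
qed

text \<open>Safety: a window hit raises the posterior of a player from b to
  (b/K) / (b/K + (1 - b)/N), which is at most c when b N (1 - c) \<le> c (1 - b) K.\<close>
lemma window_protocol_posterior:
  assumes "0 < N" "0 < K" "K \<le> N" "0 < b" "b < c" "c < 1" "i < n"
    and safe: "b * real N * (1 - c) \<le> c * (1 - b) * real K"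
  shows "posterior n b (window_protocol n N K a) x t i \<le> c"
proof -
  note pf = posterior_factor[OF window_protocol_factor[OF assms(1-3)] assms(7), of b]
  show ?thesis
  proof (cases "in_window N K (a i x) (t ! i)")
    case True
    then have tN: "t ! i < N" by (simp add: in_window_def)
    have "b / real K \<le> c * (b / real K + (1 - b) / real N)"
      using safe assms by (simp add: field_simps)
    moreover have pos: "0 < b / real K + (1 - b) / real N" using assms by (simp add: add_pos_pos)
    ultimately have "b / real K / (b / real K + (1 - b) / real N) \<le> c"
      by (subst pos_divide_le_eq[OF pos]) (simp add: mult.commute)
    then show ?thesis using pf True tN assms by (simp add: window_factor_def)
  next
    case False
    then show ?thesis using pf assms by (simp add: window_factor_def)
  qed
qed

definition words :: "nat \<Rightarrow> nat \<Rightarrow> nat list set" where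
  "words N n = {t. set t \<subseteq> {..<N} \<and> length t = n}"

lemma finite_words: "finite (words N n)"
  unfolding words_def by (rule finite_lists_length_eq) simp

lemma window_protocol_support:
  assumes "0 < N" "0 < K" "K \<le> N"
  shows "set_pmf (transcript (window_protocol n N K a) x S) \<subseteq> words N n"
proof
  fix t assume "t \<in> set_pmf (transcript (window_protocol n N K a) x S)"
  then have nz: "(if length t = n then 1 else 0) * (\<Prod>j<n. window_factor N K a x t j (j \<in> S)) \<noteq> 0"
    by (simp add: set_pmf_iff window_protocol_factor[OF assms])
  then have len: "length t = n" by (simp split: if_splits)
  have factor_nz: "window_factor N K a x t j (j \<in> S) \<noteq> 0" if "j < n" for j
    using nz that by auto
  have "t ! j < N" if "j < n" for j
    using factor_nz[OF that] by (auto simp: window_factor_def in_window_def split: if_splits)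
  then show "t \<in> words N n" using len by (auto simp: words_def in_set_conv_nth)
qed

lemma words_Suc: "words N (Suc n) = (\<lambda>(t, m). t @ [m]) ` (words N n \<times> {..<N})"
proof (intro equalityI subsetI)
  fix t assume t: "t \<in> words N (Suc n)"
  then have "t \<noteq> []" by (auto simp: words_def)
  then obtain t' m where "t = t' @ [m]" by (metis rev_exhaust)
  with t show "t \<in> (\<lambda>(t, m). t @ [m]) ` (words N n \<times> {..<N})"
    by (auto simp: words_def image_iff)
qed (auto simp: words_def)

lemma sum_words_prod:
  fixes f :: "nat \<Rightarrow> nat \<Rightarrow> real"
  shows "(\<Sum>t\<in>words N n. \<Prod>j<n. f j (t ! j)) = (\<Prod>j<n. \<Sum>m<N. f j m)"
proof (induction n)
  case 0
  have "words N 0 = {[]}" by (auto simp: words_def)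
  then show ?case by simp
next
  case (Suc n)
  have inj: "inj_on (\<lambda>(t, m). t @ [m]) (words N n \<times> {..<N})"
    by (auto simp: inj_on_def)
  have step: "(\<Prod>j<Suc n. f j ((t @ [m]) ! j)) = (\<Prod>j<n. f j (t ! j)) * f n m"
    if "t \<in> words N n" for t m
  proof -
    have len: "length t = n" using that by (simp add: words_def)
    have init: "(\<Prod>j<n. f j ((t @ [m]) ! j)) = (\<Prod>j<n. f j (t ! j))"
      using len by (intro prod.cong) (auto simp: nth_append)
    show ?thesis unfolding prod.lessThan_Suc init using len by (simp add: nth_append)
  qed
  have "(\<Sum>t\<in>words N (Suc n). \<Prod>j<Suc n. f j (t ! j)) =
      (\<Sum>(t, m)\<in>words N n \<times> {..<N}. (\<Prod>j<n. f j (t ! j)) * f n m)"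
    unfolding words_Suc sum.reindex[OF inj] by (intro sum.cong refl) (clarsimp simp del: prod.lessThan_Suc simp: step)
  also have "\<dots> = (\<Sum>t\<in>words N n. \<Prod>j<n. f j (t ! j)) * (\<Sum>m<N. f n m)"
    by (simp add: sum_product sum.cartesian_product case_prod_unfold)
  finally show ?case by (simp add: Suc.IH)
qed

text \<open>Probability that a player sends a given message, if that message is a hit (v) or not.\<close>
definition hit_prob :: "real \<Rightarrow> nat \<Rightarrow> nat \<Rightarrow> bool \<Rightarrow> real" where
  "hit_prob b N K v = b * (if v then 1 else 0) / real K + (1 - b) / real N"

lemma window_trans_prob:
  assumes "0 < N" "0 < K" "K \<le> N" "t \<in> words N n"
  shows "trans_prob n b (window_protocol n N K a) x t = (\<Prod>j<n. hit_prob b N K (in_window N K (a j x) (t ! j)))"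
proof -
  have len: "length t = n" and "set t \<subseteq> {..<N}" using assms(4) by (auto simp: words_def)
  then have "t ! j < N" if "j < n" for j using that nth_mem by blast
  then show ?thesis
    using len trans_prob_factor[OF window_protocol_factor[OF assms(1-3)]]
    by (auto simp: window_factor_def hit_prob_def intro!: prod.cong)
qed

definition hit_count :: "nat \<Rightarrow> nat \<Rightarrow> nat \<Rightarrow> (nat \<Rightarrow> nat \<Rightarrow> nat) \<Rightarrow> nat \<Rightarrow> nat list \<Rightarrow> nat" where
  "hit_count n N K a y t = card {j\<in>{..<n}. in_window N K (a j y) (t ! j)}"

lemma power_card_prod:
  fixes z :: real and n :: nat
  shows "z ^ card {j\<in>{..<n}. P j} = (\<Prod>j<n. if P j then z else 1)"
proof -
  have "(\<Prod>j<n. if P j then z else 1) = (\<Prod>j\<in>{..<n} \<inter> {j. P j}. z) * (\<Prod>j\<in>{..<n} \<inter> - {j. P j}. 1)"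
    by (intro prod.If_cases finite_lessThan)
  also have "{..<n} \<inter> {j. P j} = {j\<in>{..<n}. P j}" by auto
  finally show ?thesis by simp
qed

text \<open>One round of the moment generating function of hit counts: the message is sent for the
  codeword symbol u, hits of the window of v are weighted by z.\<close>
definition pair_mgf :: "real \<Rightarrow> nat \<Rightarrow> nat \<Rightarrow> real \<Rightarrow> nat \<Rightarrow> nat \<Rightarrow> real" where
  "pair_mgf b N K z u v = (\<Sum>m<N. hit_prob b N K (in_window N K u m) * (if in_window N K v m then z else 1))"

text \<open>The rounds are independent, so E[z^(hit count of y) | X = x] is a product over rounds.\<close>
lemma mgf_hit_count:
  assumes "0 < N" "0 < K" "K \<le> N"
  shows "(\<Sum>t\<in>words N n. trans_prob n b (window_protocol n N K a) x t * z ^ hit_count n N K a y t) =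
    (\<Prod>j<n. pair_mgf b N K z (a j x) (a j y))"
proof -
  have "(\<Sum>t\<in>words N n. trans_prob n b (window_protocol n N K a) x t * z ^ hit_count n N K a y t) =
     (\<Sum>t\<in>words N n. \<Prod>j<n. hit_prob b N K (in_window N K (a j x) (t ! j)) *
                              (if in_window N K (a j y) (t ! j) then z else 1))"
    unfolding hit_count_def power_card_prod
    by (intro sum.cong refl) (simp add: window_trans_prob[OF assms] prod.distrib)
  also have "\<dots> = (\<Prod>j<n. pair_mgf b N K z (a j x) (a j y))"
    unfolding pair_mgf_def by (rule sum_words_prod)
  finally show ?thesis .
qed

lemma hit_prob_total:
  assumes "0 < N" "0 < K" "K \<le> N"
  shows "real K * hit_prob b N K True + (real N - real K) * hit_prob b N K False = 1"
  using assms by (simp add: hit_prob_def field_simps)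

lemma sum_window_trans_prob:
  assumes "0 < N" "0 < K" "K \<le> N"
  shows "(\<Sum>t\<in>words N n. trans_prob n b (window_protocol n N K a) x t) = 1"
  using mgf_hit_count[OF assms, of n b a x 1 x] sum_window_over_messages[OF assms(1,3), of "hit_prob b N K"]
  by (simp add: pair_mgf_def hit_prob_total[OF assms])

lemma pair_mgf_same:
  assumes "0 < N" "0 < K" "K \<le> N"
  shows "pair_mgf b N K z u u = z * (b + (1 - b) * real K / real N) + (1 - b) * (real N - real K) / real N"
proof -
  have "pair_mgf b N K z u u = real K * (hit_prob b N K True * z) + (real N - real K) * hit_prob b N K False"
    unfolding pair_mgf_def
    using sum_window_over_messages[OF assms(1,3), of "\<lambda>v. hit_prob b N K v * (if v then z else 1)" u]
    by simp
  also have "\<dots> = z * (b + (1 - b) * real K / real N) + (1 - b) * (real N - real K) / real N"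
    using assms by (simp add: hit_prob_def field_simps)
  finally show ?thesis .
qed

lemma pair_mgf_nonneg:
  assumes "0 < N" "0 < K" "0 \<le> b" "b \<le> 1" "0 \<le> z"
  shows "0 \<le> pair_mgf b N K z u v"
  unfolding pair_mgf_def hit_prob_def using assms by (intro sum_nonneg mult_nonneg_nonneg add_nonneg_nonneg) auto

text \<open>Averaged over both codeword symbols, a foreign window is hit with probability K/N.\<close>
lemma pair_mgf_average:
  assumes "0 < N" "0 < K" "K \<le> N"
  shows "(\<Sum>u<N. \<Sum>v<N. pair_mgf b N K z u v) = real N * (real K * z + real N - real K)"
proof -
  have "(\<Sum>u<N. \<Sum>v<N. pair_mgf b N K z u v) =
      (\<Sum>m<N. (\<Sum>u<N. hit_prob b N K (in_window N K u m)) * (\<Sum>v<N. if in_window N K v m then z else 1))"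
  proof -
    have "(\<Sum>u<N. \<Sum>v<N. pair_mgf b N K z u v) =
        (\<Sum>u<N. \<Sum>m<N. \<Sum>v<N. hit_prob b N K (in_window N K u m) * (if in_window N K v m then z else 1))"
      unfolding pair_mgf_def by (rule sum.cong[OF refl], rule sum.swap)
    also have "\<dots> = (\<Sum>m<N. \<Sum>u<N. \<Sum>v<N. hit_prob b N K (in_window N K u m) * (if in_window N K v m then z else 1))"
      by (rule sum.swap)
    finally show ?thesis by (simp only: sum_product)
  qed
  also have "\<dots> = (\<Sum>m<N. real K * z + real N - real K)"
  proof (intro sum.cong refl)
    fix m assume "m \<in> {..<N}"
    then show "(\<Sum>u<N. hit_prob b N K (in_window N K u m)) * (\<Sum>v<N. if in_window N K v m then z else 1) =
        real K * z + real N - real K"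
      using sum_window_over_centres[OF assms(1,3), of m "hit_prob b N K"]
        sum_window_over_centres[OF assms(1,3), of m "\<lambda>v. if v then z else 1"]
      by (simp add: hit_prob_total[OF assms])
  qed
  finally show ?thesis by simp
qed

section \<open>Achievability: random codebooks and expurgation\<close>

text \<open>Summing a function of two coordinates x \<noteq> y over all maps J \<rightarrow> B: each pair of values
  is attained by exactly |B|^(|J| - 2) maps.\<close>
lemma sum_PiE_two_coords:
  fixes h :: "'b \<Rightarrow> 'b \<Rightarrow> real"
  assumes J: "finite J" "x \<in> J" "y \<in> J" "x \<noteq> y" and B: "finite B"
  shows "(\<Sum>f\<in>PiE J (\<lambda>_. B). h (f x) (f y)) = real (card B) ^ (card J - 2) * (\<Sum>u\<in>B. \<Sum>v\<in>B. h u v)"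
proof -
  let ?F = "PiE J (\<lambda>_. B)"
  let ?fiber = "\<lambda>u v. PiE J (\<lambda>j. if j = x then {u} else if j = y then {v} else B)"
  have fiber: "{f \<in> ?F. f x = u \<and> f y = v} = ?fiber u v" if "u \<in> B" "v \<in> B" for u v
    using J that by (auto simp: PiE_iff extensional_def split: if_splits)
  have card_fiber: "card (?fiber u v) = card B ^ (card J - 2)" for u v
  proof -
    have "card (?fiber u v) = (\<Prod>j\<in>J. card (if j = x then {u} else if j = y then {v} else B))"
      using J by (simp add: card_PiE)
    also have "\<dots> = (\<Prod>j\<in>J - {x, y}. card B)"
      using J by (intro prod.mono_neutral_cong_right) auto
    moreover have "card (J - {x, y}) = card J - 2" using J by (simp add: card_Diff_subset)
    ultimately show ?thesis by simp
  qed
  have "(\<Sum>f\<in>?F. h (f x) (f y)) = (\<Sum>p\<in>B \<times> B. \<Sum>f\<in>{f \<in> ?F. (f x, f y) = p}. h (f x) (f y))"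
    using J B by (intro sum.group[symmetric]) (auto simp: finite_PiE)
  also have "\<dots> = (\<Sum>(u, v)\<in>B \<times> B. real (card B) ^ (card J - 2) * h u v)"
  proof (intro sum.cong refl)
    fix p assume "p \<in> B \<times> B"
    then obtain u v where uv: "p = (u, v)" "u \<in> B" "v \<in> B" by blast
    have "(\<Sum>f\<in>{f \<in> ?F. f x = u \<and> f y = v}. h (f x) (f y)) = (\<Sum>f\<in>{f \<in> ?F. f x = u \<and> f y = v}. h u v)"
      by (intro sum.cong) auto
    then show "(\<Sum>f\<in>{f \<in> ?F. (f x, f y) = p}. h (f x) (f y)) = (case p of (u, v) \<Rightarrow> real (card B) ^ (card J - 2) * h u v)"
      using uv by (simp add: fiber card_fiber)
  qed
  finally show ?thesis by (simp add: sum.cartesian_product sum_distrib_left case_prod_unfold)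
qed

lemma codebook_average:
  fixes \<Phi> :: "nat \<Rightarrow> nat \<Rightarrow> real" and X2 :: "nat set" and n :: nat
  assumes X2: "finite X2" "x \<in> X2" "y \<in> X2" "x \<noteq> y" and N: "0 < N"
  defines "codebooks \<equiv> PiE {..<n} (\<lambda>_. PiE X2 (\<lambda>_. {..<N}))"
  shows "(\<Sum>a\<in>codebooks. \<Prod>j<n. \<Phi> (a j x) (a j y))
     = real (card codebooks) * ((\<Sum>u<N. \<Sum>v<N. \<Phi> u v) / (real N)^2) ^ n"
proof -
  have "2 \<le> card X2"
    using X2 card_mono[of X2 "{x, y}"] by auto
  then have N_pow: "real N ^ card X2 = real N ^ (card X2 - 2) * (real N)^2"
    by (metis le_add_diff_inverse2 power_add)
  have "(\<Sum>a\<in>codebooks. \<Prod>j<n. \<Phi> (a j x) (a j y)) = (\<Prod>j<n. \<Sum>f\<in>PiE X2 (\<lambda>_. {..<N}). \<Phi> (f x) (f y))"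
    unfolding codebooks_def using X2(1) by (intro prod_sum_PiE[symmetric]) (auto intro: finite_PiE)
  also have "\<dots> = (real N ^ (card X2 - 2) * (\<Sum>u<N. \<Sum>v<N. \<Phi> u v)) ^ n"
    using sum_PiE_two_coords[OF X2, of "{..<N}" \<Phi>] by simp
  also have "\<dots> = (real N ^ card X2) ^ n * ((\<Sum>u<N. \<Sum>v<N. \<Phi> u v) / (real N)^2) ^ n"
    unfolding N_pow power_mult_distrib[symmetric] using N by (simp add: field_simps)
  also have "(real N ^ card X2) ^ n = real (card codebooks)"
    unfolding codebooks_def using X2(1) by (simp add: card_PiE finite_PiE)
  finally show ?thesis .
qed

lemma exists_le_average:
  fixes f :: "'a \<Rightarrow> real"
  assumes "finite A" "A \<noteq> {}" "(\<Sum>a\<in>A. f a) \<le> real (card A) * T"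
  obtains a where "a \<in> A" "f a \<le> T"
proof (rule ccontr)
  assume "\<not> thesis"
  then have "\<forall>a\<in>A. T < f a" using that by force
  then have "(\<Sum>a\<in>A. T) < (\<Sum>a\<in>A. f a)" using assms by (intro sum_strict_mono) auto
  then show False using assms by simp
qed

text \<open>Expurgation (Markov's inequality): if 2M nonnegative values sum to at most 2M T, then
  at least M of them are at most 2T.\<close>
lemma expurgate:
  fixes V :: "'a \<Rightarrow> real"
  assumes X2: "finite X2" "card X2 = 2 * M" and V0: "\<And>x. 0 \<le> V x" and T: "0 \<le> T"
    and S: "(\<Sum>x\<in>X2. V x) \<le> 2 * real M * T"
  obtains Y where "Y \<subseteq> X2" "card Y = M" "\<And>x. x \<in> Y \<Longrightarrow> V x \<le> 2 * T"
proof -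
  define G where "G = {x\<in>X2. V x \<le> 2 * T}"
  have "M \<le> card G"
  proof (rule ccontr)
    assume "\<not> M \<le> card G"
    moreover have "card (X2 - G) = 2 * M - card G"
      using X2 by (simp add: G_def card_Diff_subset)
    ultimately have bad: "M + 1 \<le> card (X2 - G)" by simp
    then have "0 < card (X2 - G)" by linarith
    then have "X2 - G \<noteq> {}" using card_gt_0_iff by blast
    then have "(\<Sum>x\<in>X2 - G. 2 * T) < (\<Sum>x\<in>X2 - G. V x)"
      using X2 by (intro sum_strict_mono) (auto simp: G_def)
    also have "\<dots> \<le> (\<Sum>x\<in>X2. V x)" using X2 V0 by (intro sum_mono2) auto
    finally have "real (card (X2 - G)) * (2 * T) < 2 * real M * T" using S by simp
    moreover have "real M * (2 * T) \<le> real (card (X2 - G)) * (2 * T)"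
      using bad T by (intro mult_right_mono) auto
    ultimately show False by simp
  qed
  then obtain Y where "Y \<subseteq> G" "card Y = M" by (meson obtain_subset_with_card_n)
  then show ?thesis using that by (auto simp: G_def)
qed

definition kl_div :: "real \<Rightarrow> real \<Rightarrow> real" where
  "kl_div t q = t * (ln t - ln q) + (1 - t) * (ln (1 - t) - ln (1 - q))"

text \<open>The smallest window ratio K/N for which the window protocol is safe.\<close>
definition safe_ratio :: "real \<Rightarrow> real \<Rightarrow> real" where
  "safe_ratio b c = b * (1 - c) / (c * (1 - b))"

lemma safe_ratio_bounds:
  assumes "0 < b" "b < c" "c < 1"
  shows "0 < safe_ratio b c" "safe_ratio b c < b / c" "b / c < 1"
    and "b + (1 - b) * safe_ratio b c = b / c"
  using assms by (auto simp: safe_ratio_def field_simps mult_strict_left_mono)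

lemma safe_ratio_le_iff:
  assumes "0 < b" "b < c" "c < 1" "0 < N"
  shows "safe_ratio b c \<le> real K / real N \<longleftrightarrow> b * real N * (1 - c) \<le> c * (1 - b) * real K"
  using assms by (simp add: safe_ratio_def field_simps)

lemma kl_div_limit_value:
  assumes "0 < b" "b < c" "c < 1"
  shows "kl_div (b / c) (safe_ratio b c) = ln (1 - b) - b * ln (1 - c) / c"
proof -
  have l1: "ln (b / c) - ln (b * (1 - c) / (c * (1 - b))) = ln (1 - b) - ln (1 - c)"
    using assms by (simp add: ln_div ln_mult)
  have "1 - b / c = (c - b) / c" "1 - b * (1 - c) / (c * (1 - b)) = (c - b) / (c * (1 - b))"
    using assms by (simp_all add: field_simps)
  then have l2: "ln (1 - b / c) - ln (1 - b * (1 - c) / (c * (1 - b))) = ln (1 - b)"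
    using assms by (simp add: ln_div ln_mult)
  show ?thesis unfolding kl_div_def safe_ratio_def l1 l2 using assms by (simp add: field_simps)
qed

text \<open>Chernoff exponent for a foreign codeword (hit probability q): with the optimal
  z = t(1-q)/(q(1-t)) \<ge> 1, the bound E[z^count] z^(-tn) decays at rate D(t||q).\<close>
lemma chernoff_foreign_exponent:
  fixes q t :: real
  assumes "0 < q" "q < t" "t < 1"
  defines "z \<equiv> t * (1 - q) / (q * (1 - t))"
  shows "1 \<le> z" and "ln (q * z + (1 - q)) - t * ln z = - kl_div t q"
proof -
  have "q * (1 - t) \<le> t * (1 - q)" using assms by (simp add: algebra_simps)
  then show "1 \<le> z" unfolding z_def using assms by (simp add: le_divide_eq)
  have "q * z + (1 - q) = (1 - q) / (1 - t)"
    unfolding z_def using assms by (simp add: field_simps)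
  then have lb: "ln (q * z + (1 - q)) = ln (1 - q) - ln (1 - t)"
    using assms by (simp add: ln_div)
  have lz: "ln z = ln t + ln (1 - q) - ln q - ln (1 - t)"
    unfolding z_def using assms by (simp add: ln_div ln_mult)
  show "ln (q * z + (1 - q)) - t * ln z = - kl_div t q"
    unfolding lz lb kl_div_def by (simp add: algebra_simps)
qed

text \<open>Chernoff exponent for the own codeword (hit probability p > t): some z' < 1 gives
  E[z'^count] z'^(-tn) exponentially small, since the exponent has derivative p - t > 0 at z' = 1.\<close>
lemma chernoff_own_exponent:
  fixes p t :: real
  assumes "0 < p" "p < 1" "t < p"
  obtains z' where "0 < z'" "z' < 1" "ln (z' * p + (1 - p)) - t * ln z' < 0"
proof -
  define h where "h w = ln (w * p + (1 - p)) - t * ln w" for w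
  have "(h has_real_derivative (p - t)) (at 1)"
    unfolding h_def using assms by (auto intro!: derivative_eq_intros)
  from DERIV_pos_inc_left[OF this] assms
  obtain d where d: "d > 0" "\<And>e. e > 0 \<Longrightarrow> e < d \<Longrightarrow> h (1 - e) < h 1"
    by auto
  define e where "e = min (d / 2) (1 / 2)"
  have "h (1 - e) < h 1" using d by (intro d(2)) (auto simp: e_def)
  moreover have "h 1 = 0" by (simp add: h_def)
  moreover have "0 < 1 - e" "1 - e < 1" using d by (auto simp: e_def)
  ultimately show ?thesis by (intro that[of "1 - e"]) (auto simp: h_def)
qed

lemma ceiling_ratio:
  fixes \<kappa> :: real
  assumes "0 \<le> \<kappa>"
  shows "0 < N \<Longrightarrow> \<kappa> \<le> real (nat \<lceil>\<kappa> * real N\<rceil>) / real N"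
    and "(\<lambda>N. real (nat \<lceil>\<kappa> * real N\<rceil>) / real N) \<longlonglongrightarrow> \<kappa>"
proof -
  have "real (nat \<lceil>\<kappa> * real N\<rceil>) = of_int \<lceil>\<kappa> * real N\<rceil>" for N
    using assms by (simp add: of_nat_nat)
  then have K: "\<kappa> * real N \<le> real (nat \<lceil>\<kappa> * real N\<rceil>)" "real (nat \<lceil>\<kappa> * real N\<rceil>) \<le> \<kappa> * real N + 1" for N
    by (simp_all add: le_of_int_ceiling of_int_ceiling_le_add_one)
  have lower: "\<kappa> \<le> real (nat \<lceil>\<kappa> * real N\<rceil>) / real N" if "0 < N" for N
    using K that by (simp add: le_divide_eq)
  then show "0 < N \<Longrightarrow> \<kappa> \<le> real (nat \<lceil>\<kappa> * real N\<rceil>) / real N" .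
  have upper: "real (nat \<lceil>\<kappa> * real N\<rceil>) / real N \<le> \<kappa> + inverse (real N)" if "0 < N" for N
  proof -
    have "real (nat \<lceil>\<kappa> * real N\<rceil>) / real N \<le> (\<kappa> * real N + 1) / real N"
      using K(2) by (rule divide_right_mono) simp
    also have "\<dots> = \<kappa> + inverse (real N)" using that by (simp add: field_simps)
    finally show ?thesis .
  qed
  show "(\<lambda>N. real (nat \<lceil>\<kappa> * real N\<rceil>) / real N) \<longlonglongrightarrow> \<kappa>"
  proof (rule tendsto_sandwich[of "\<lambda>_. \<kappa>" _ _ "\<lambda>N. \<kappa> + inverse (real N)"])
    show "\<forall>\<^sub>F N in sequentially. \<kappa> \<le> real (nat \<lceil>\<kappa> * real N\<rceil>) / real N"
      using eventually_gt_at_top[of 0] by eventually_elim (rule lower)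
    show "\<forall>\<^sub>F N in sequentially. real (nat \<lceil>\<kappa> * real N\<rceil>) / real N \<le> \<kappa> + inverse (real N)"
      using eventually_gt_at_top[of 0] by eventually_elim (rule upper)
    show "(\<lambda>N. \<kappa> + inverse (real N)) \<longlonglongrightarrow> \<kappa>"
      using tendsto_add[OF tendsto_const lim_inverse_n, of \<kappa>] by simp
  qed simp
qed

text \<open>Take K/N \<rightarrow> b(1-c)/(c(1-b)) and t \<rightarrow> b/c.\<close>
lemma params_exist:
  assumes b: "0 < b" "b < c" "c < 1" and R: "R * ln 2 < ln (1 - b) - b * ln (1 - c) / c"
  obtains N K t where "0 < N" "0 < K" "K < N" "b * real N * (1 - c) \<le> c * (1 - b) * real K"
      "real K / real N < t" "t < b + (1 - b) * (real K / real N)" "t < 1"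
      "R * ln 2 < kl_div t (real K / real N)"
proof -
  define \<kappa> where "\<kappa> = safe_ratio b c"
  have \<kappa>: "0 < \<kappa>" "\<kappa> < b / c" "b / c < 1" "b + (1 - b) * \<kappa> = b / c"
    unfolding \<kappa>_def by (rule safe_ratio_bounds[OF b])+
  define KN where "KN N = nat \<lceil>\<kappa> * real N\<rceil>" for N :: nat
  define qn where "qn N = real (KN N) / real N" for N :: nat
  define tn where "tn N = b + (1 - b) * qn N - inverse (real N)" for N :: nat
  have qlo: "\<kappa> \<le> qn N" if "0 < N" for N
    unfolding qn_def KN_def using ceiling_ratio(1)[of \<kappa> N] \<kappa> that by simp
  have qlim: "qn \<longlonglongrightarrow> \<kappa>"
    unfolding qn_def KN_def using ceiling_ratio(2)[of \<kappa>] \<kappa> by simp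
  have "tn \<longlonglongrightarrow> b + (1 - b) * \<kappa> - 0"
    unfolding tn_def by (intro tendsto_intros qlim lim_inverse_n)
  then have tlim: "tn \<longlonglongrightarrow> b / c" using \<kappa>(4) by simp
  have "(\<lambda>N. kl_div (tn N) (qn N)) \<longlonglongrightarrow> kl_div (b / c) \<kappa>"
    unfolding kl_div_def using b \<kappa> by (intro tendsto_intros tlim qlim) auto
  moreover have "kl_div (b / c) \<kappa> = ln (1 - b) - b * ln (1 - c) / c"
    unfolding \<kappa>_def by (rule kl_div_limit_value[OF b])
  ultimately have e1: "\<forall>\<^sub>F N in sequentially. R * ln 2 < kl_div (tn N) (qn N)"
    using R by (simp add: order_tendstoD(1))
  have "\<forall>\<^sub>F N in sequentially. 0 < tn N - qn N"
    using order_tendstoD(1)[OF tendsto_diff[OF tlim qlim], of 0] \<kappa> by simp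
  then have e2: "\<forall>\<^sub>F N in sequentially. qn N < tn N" by (rule eventually_mono) simp
  have e3: "\<forall>\<^sub>F N in sequentially. tn N < 1" using order_tendstoD(2)[OF tlim \<kappa>(3)] .
  have e4: "\<forall>\<^sub>F N in sequentially. qn N < 1" using order_tendstoD(2)[OF qlim] \<kappa> by simp
  have "\<forall>\<^sub>F N in sequentially. R * ln 2 < kl_div (tn N) (qn N) \<and> qn N < tn N \<and> tn N < 1 \<and> qn N < 1 \<and> 0 < N"
    using e1 e2 e3 e4 eventually_gt_at_top[of 0] by eventually_elim auto
  then obtain N where N: "R * ln 2 < kl_div (tn N) (qn N)" "qn N < tn N" "tn N < 1" "qn N < 1" "0 < N"
    by (auto simp: eventually_sequentially)
  have K0: "0 < KN N" using \<kappa> N(5) by (simp add: KN_def)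
  have KN: "KN N < N" using N(4,5) by (simp add: qn_def divide_less_eq)
  have "b * real N * (1 - c) \<le> c * (1 - b) * real (KN N)"
    using qlo[OF N(5)] safe_ratio_le_iff[OF b N(5)] by (simp add: qn_def \<kappa>_def)
  moreover have "tn N < b + (1 - b) * qn N" using N(5) by (simp add: tn_def)
  ultimately show ?thesis using that[of N "KN N" "tn N"] N K0 KN by (simp add: qn_def)
qed

definition threshold_decoder :: "nat \<Rightarrow> nat \<Rightarrow> nat \<Rightarrow> (nat \<Rightarrow> nat \<Rightarrow> nat) \<Rightarrow> real \<Rightarrow> nat set \<Rightarrow> nat list \<Rightarrow> nat" where
  "threshold_decoder n N K a \<tau> X t = (if \<exists>y\<in>X. \<tau> * real n \<le> real (hit_count n N K a y t)
     then LEAST y. y \<in> X \<and> \<tau> * real n \<le> real (hit_count n N K a y t) else 1)"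

lemma threshold_decoder_in: "1 \<in> X \<Longrightarrow> threshold_decoder n N K a \<tau> X t \<in> X"
  unfolding threshold_decoder_def by (auto intro: LeastI2_ex)

lemma threshold_decoder_wrong:
  assumes "x \<in> X" "threshold_decoder n N K a \<tau> X t \<noteq> x"
  shows "real (hit_count n N K a x t) < \<tau> * real n \<or> (\<exists>y\<in>X - {x}. \<tau> * real n \<le> real (hit_count n N K a y t))"
proof (cases "real (hit_count n N K a x t) < \<tau> * real n")
  case False
  then have ex: "\<exists>y. y \<in> X \<and> \<tau> * real n \<le> real (hit_count n N K a y t)" using assms(1) by auto
  then have "threshold_decoder n N K a \<tau> X t = (LEAST y. y \<in> X \<and> \<tau> * real n \<le> real (hit_count n N K a y t))"
    unfolding threshold_decoder_def by auto
  then have "threshold_decoder n N K a \<tau> X t \<in> X \<and>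
      \<tau> * real n \<le> real (hit_count n N K a (threshold_decoder n N K a \<tau> X t) t)"
    using LeastI_ex[OF ex] by simp
  then show ?thesis using assms(2) by blast
qed simp

lemma power_as_exp: "0 < z \<Longrightarrow> (z::real) ^ k = exp (real k * ln z)"
  by (simp add: exp_of_nat_mult)

lemma decoding_error_indicator:
  assumes X: "finite X" "x \<in> X" and z': "0 < z'" "z' < 1" and z: "1 \<le> z"
    and wrong: "threshold_decoder n N K a \<tau> X t \<noteq> x"
  shows "1 \<le> z' ^ hit_count n N K a x t * exp (- \<tau> * real n * ln z')
            + (\<Sum>y\<in>X - {x}. z ^ hit_count n N K a y t * exp (- \<tau> * real n * ln z))"
    (is "1 \<le> ?own + ?foreign")
proof -
  have pow: "w ^ k * exp (- \<tau> * real n * ln w) = exp ((real k - \<tau> * real n) * ln w)" if "0 < w" for w :: real and k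
    using that by (simp add: power_as_exp exp_diff exp_minus field_simps)
  have foreign_nonneg: "0 \<le> ?foreign" using z by (intro sum_nonneg) auto
  from threshold_decoder_wrong[OF X(2) wrong] show ?thesis
  proof
    assume few: "real (hit_count n N K a x t) < \<tau> * real n"
    have "0 \<le> (real (hit_count n N K a x t) - \<tau> * real n) * ln z'"
      using few z' by (intro mult_nonpos_nonpos) auto
    then have "1 \<le> ?own" unfolding pow[OF z'(1)] by simp
    then show ?thesis using foreign_nonneg by linarith
  next
    assume "\<exists>y\<in>X - {x}. \<tau> * real n \<le> real (hit_count n N K a y t)"
    then obtain y where y: "y \<in> X - {x}" "\<tau> * real n \<le> real (hit_count n N K a y t)" by blast
    have "0 \<le> (real (hit_count n N K a y t) - \<tau> * real n) * ln z"
      using y z by (intro mult_nonneg_nonneg) auto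
    then have "1 \<le> z ^ hit_count n N K a y t * exp (- \<tau> * real n * ln z)"
      unfolding pow[OF order.strict_trans2[OF zero_less_one z]] by simp
    also have "\<dots> \<le> ?foreign"
      using y z X by (intro member_le_sum) auto
    moreover have "0 \<le> ?own" using z' by simp
    ultimately show ?thesis by linarith
  qed
qed

text \<open>Union and Chernoff bound for the error probability of the threshold decoder, in terms of
  the moment generating functions of the hit counts.\<close>
lemma decoding_error_bound:
  fixes a :: "nat \<Rightarrow> nat \<Rightarrow> nat" and n :: nat
  assumes NK: "0 < N" "0 < K" "K \<le> N" and b: "0 \<le> b" "b \<le> 1"
    and X: "finite X" "x \<in> X" and z': "0 < z'" "z' < 1" and z: "1 \<le> z"
  defines "Tp \<equiv> trans_prob n b (window_protocol n N K a) x"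
  shows "(\<Sum>t\<in>{t\<in>words N n. threshold_decoder n N K a \<tau> X t \<noteq> x}. Tp t)
    \<le> exp (- \<tau> * real n * ln z') * (z' * (b + (1 - b) * real K / real N) + (1 - b) * (real N - real K) / real N) ^ n
      + exp (- \<tau> * real n * ln z) * (\<Sum>y\<in>X - {x}. \<Prod>j<n. pair_mgf b N K z (a j x) (a j y))"
proof -
  define e1 where "e1 = exp (- \<tau> * real n * ln z')"
  define e2 where "e2 = exp (- \<tau> * real n * ln z)"
  define B where "B t = z' ^ hit_count n N K a x t * e1 + (\<Sum>y\<in>X - {x}. z ^ hit_count n N K a y t * e2)" for t
  have Tp0: "0 \<le> Tp t" for t unfolding Tp_def using b by (rule trans_prob_nonneg)
  have B0: "0 \<le> B t" for t using z z' unfolding B_def e1_def e2_def by (intro add_nonneg_nonneg sum_nonneg) auto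
  have "(\<Sum>t\<in>{t\<in>words N n. threshold_decoder n N K a \<tau> X t \<noteq> x}. Tp t)
      \<le> (\<Sum>t\<in>{t\<in>words N n. threshold_decoder n N K a \<tau> X t \<noteq> x}. Tp t * B t)"
  proof (rule sum_mono)
    fix t assume "t \<in> {t\<in>words N n. threshold_decoder n N K a \<tau> X t \<noteq> x}"
    then have "1 \<le> B t" using decoding_error_indicator[OF X z' z] by (simp add: B_def e1_def e2_def)
    from mult_left_mono[OF this Tp0[of t]] show "Tp t \<le> Tp t * B t" by simp
  qed
  also have "\<dots> \<le> (\<Sum>t\<in>words N n. Tp t * B t)"
    using finite_words Tp0 B0 by (intro sum_mono2) auto
  also have "\<dots> = e1 * (\<Sum>t\<in>words N n. Tp t * z' ^ hit_count n N K a x t)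
      + e2 * (\<Sum>y\<in>X - {x}. \<Sum>t\<in>words N n. Tp t * z ^ hit_count n N K a y t)"
    unfolding B_def
    by (simp add: distrib_left sum.distrib sum_distrib_left sum_distrib_right mult_ac sum.swap[of _ "X - {x}"])
  also have "(\<Sum>t\<in>words N n. Tp t * z' ^ hit_count n N K a x t) =
      (z' * (b + (1 - b) * real K / real N) + (1 - b) * (real N - real K) / real N) ^ n"
    unfolding Tp_def mgf_hit_count[OF NK] by (simp add: pair_mgf_same[OF NK])
  also have "(\<Sum>y\<in>X - {x}. \<Sum>t\<in>words N n. Tp t * z ^ hit_count n N K a y t) =
      (\<Sum>y\<in>X - {x}. \<Prod>j<n. pair_mgf b N K z (a j x) (a j y))"
    unfolding Tp_def by (intro sum.cong refl mgf_hit_count[OF NK])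
  finally show ?thesis unfolding e1_def e2_def .
qed

lemma window_protocol_safe:
  assumes NK: "0 < N" "0 < K" "K \<le> N" and safe: "b * real N * (1 - c) \<le> c * (1 - b) * real K"
    and b: "0 < b" "b < c" "c < 1" and n: "0 < n"
    and z': "0 < z'" "z' < 1" and z: "1 \<le> z"
    and W: "\<And>x. x \<in> secret_set h \<Longrightarrow> (\<Sum>y\<in>secret_set h - {x}. \<Prod>j<n. pair_mgf b N K z (a j x) (a j y)) \<le> W"
    and eps: "exp (- \<tau> * real n * ln z') * (z' * (b + (1 - b) * real K / real N) + (1 - b) * (real N - real K) / real N) ^ n
         + exp (- \<tau> * real n * ln z) * W \<le> \<epsilon>"
  shows "safe_protocol n h b c \<epsilon> (window_protocol n N K a) (threshold_decoder n N K a \<tau> (secret_set h))"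
proof -
  define X where "X = secret_set h"
  define P where "P = window_protocol n N K a"
  define D where "D = threshold_decoder n N K a \<tau> X"
  have post: "posterior n b P x t i \<le> c" if "i < n" for i t x
    unfolding P_def by (rule window_protocol_posterior[OF NK b that safe])
  have correct: "1 - \<epsilon> \<le> cond_prob n b P x (\<lambda>t. (\<forall>i<n. posterior n b P x t i \<le> c) \<and> D t = x)"
    if x: "x \<in> X" for x
  proof -
    let ?Tp = "trans_prob n b P x"
    have split: "(\<Sum>t\<in>words N n. ?Tp t) =
        (\<Sum>t\<in>{t\<in>words N n. D t = x}. ?Tp t) + (\<Sum>t\<in>{t\<in>words N n. D t \<noteq> x}. ?Tp t)"
      by (simp add: finite_words sum.inter_filter sum.distrib[symmetric]) (intro sum.cong, auto)
    have "exp (- \<tau> * real n * ln z) * (\<Sum>y\<in>X - {x}. \<Prod>j<n. pair_mgf b N K z (a j x) (a j y))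
        \<le> exp (- \<tau> * real n * ln z) * W"
      using W[of x] x unfolding X_def by (intro mult_left_mono) auto
    moreover have "0 \<le> b" "b \<le> 1" using b by auto
    ultimately have error: "(\<Sum>t\<in>{t\<in>words N n. D t \<noteq> x}. ?Tp t) \<le> \<epsilon>"
      using decoding_error_bound[OF NK _ _ finite_secret_set x[unfolded X_def] z' z, of b n a \<tau>] eps
      unfolding P_def D_def X_def by linarith
    have total: "(\<Sum>t\<in>words N n. ?Tp t) = 1" unfolding P_def by (rule sum_window_trans_prob[OF NK])
    have "cond_prob n b P x (\<lambda>t. (\<forall>i<n. posterior n b P x t i \<le> c) \<and> D t = x) =
        (\<Sum>t\<in>{t\<in>words N n. (\<forall>i<n. posterior n b P x t i \<le> c) \<and> D t = x}. ?Tp t)"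
      unfolding P_def by (rule cond_prob_sum[OF finite_words window_protocol_support[OF NK]])
    also have "{t\<in>words N n. (\<forall>i<n. posterior n b P x t i \<le> c) \<and> D t = x} = {t\<in>words N n. D t = x}"
      using post by blast
    finally show ?thesis using split total error by linarith
  qed
  have "valid_protocol n P" unfolding P_def by (rule window_protocol_valid[OF n NK])
  moreover have "D t \<in> X" for t unfolding D_def X_def by (rule threshold_decoder_in[OF one_in_secret_set])
  ultimately show ?thesis
    unfolding safe_protocol_def risky_protocol_def X_def[symmetric] P_def[symmetric] D_def[symmetric]
    using correct post by blast
qed

lemma codebook_total:
  fixes n :: nat and X2 :: "nat set"
  assumes NK: "0 < N" "0 < K" "K \<le> N" and X2: "finite X2" "card X2 = 2 * M" "0 < M"
  defines "codebooks \<equiv> PiE {..<n} (\<lambda>_. PiE X2 (\<lambda>_. {..<N}))"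
  shows "(\<Sum>a\<in>codebooks. \<Sum>x\<in>X2. \<Sum>y\<in>X2 - {x}. \<Prod>j<n. pair_mgf b N K z (a j x) (a j y))
     = real (card codebooks) * (2 * real M * ((2 * real M - 1) * ((real K * z + real N - real K) / real N) ^ n))"
proof -
  define \<beta> where "\<beta> = (real K * z + real N - real K) / real N"
  have avg: "(\<Sum>a\<in>codebooks. \<Prod>j<n. pair_mgf b N K z (a j x) (a j y)) = real (card codebooks) * \<beta> ^ n"
    if "x \<in> X2" "y \<in> X2" "x \<noteq> y" for x y
    using codebook_average[OF X2(1) that NK(1), of "pair_mgf b N K z" n] NK
    unfolding codebooks_def \<beta>_def pair_mgf_average[OF NK] by (simp add: power2_eq_square)
  have "(\<Sum>a\<in>codebooks. \<Sum>x\<in>X2. \<Sum>y\<in>X2 - {x}. \<Prod>j<n. pair_mgf b N K z (a j x) (a j y))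
      = (\<Sum>x\<in>X2. \<Sum>y\<in>X2 - {x}. \<Sum>a\<in>codebooks. \<Prod>j<n. pair_mgf b N K z (a j x) (a j y))"
    by (subst sum.swap) (simp add: sum.swap[of _ codebooks])
  also have "\<dots> = (\<Sum>x\<in>X2. \<Sum>y\<in>X2 - {x}. real (card codebooks) * \<beta> ^ n)"
    by (intro sum.cong refl avg) auto
  also have "\<dots> = real (2 * M) * (real (2 * M - 1) * (real (card codebooks) * \<beta> ^ n))"
    using X2 by simp
  finally show ?thesis using X2(3) by (simp add: \<beta>_def of_nat_diff)
qed

text \<open>Random coding with expurgation: there is a codebook for M secrets in which the
  foreign-codeword terms of every secret sum to at most 2 (2M - 1) \<beta>^n.\<close>
lemma good_codebook_exists:
  fixes b z :: real and n :: nat and X :: "'a set"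
  assumes NK: "0 < N" "0 < K" "K \<le> N" and b: "0 \<le> b" "b \<le> 1" and z: "1 \<le> z"
    and X: "finite X" "card X = M" "0 < M"
  obtains a where "\<And>x. x \<in> X \<Longrightarrow> (\<Sum>y\<in>X - {x}. \<Prod>j<n. pair_mgf b N K z (a j x) (a j y))
      \<le> 2 * ((2 * real M - 1) * ((real K * z + real N - real K) / real N) ^ n)"
proof -
  define X2 where "X2 = {1..2 * M}"
  define codebooks where "codebooks = PiE {..<n} (\<lambda>_. PiE X2 (\<lambda>_. {..<N}))"
  define V where "V a x = (\<Sum>y\<in>X2 - {x}. \<Prod>j<n. pair_mgf b N K z (a j x) (a j y))" for a x
  define T where "T = (2 * real M - 1) * ((real K * z + real N - real K) / real N) ^ n"
  have X2: "finite X2" "card X2 = 2 * M" by (simp_all add: X2_def)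
  have mgf0: "0 \<le> pair_mgf b N K z u v" for u v using NK b z by (intro pair_mgf_nonneg) auto
  have V0: "0 \<le> V a x" for a x unfolding V_def using mgf0 by (intro sum_nonneg prod_nonneg) auto
  have "real K \<le> real K * z" using z by (simp add: mult_le_cancel_left1)
  then have "0 \<le> real K * z + real N - real K" by linarith
  then have "0 \<le> (real K * z + real N - real K) / real N" by simp
  then have T0: "0 \<le> T" unfolding T_def using X(3) by simp
  have codebooks: "finite codebooks" "codebooks \<noteq> {}"
    using X2 NK(1) by (auto simp: codebooks_def finite_PiE PiE_eq_empty_iff)
  have "(\<Sum>a\<in>codebooks. \<Sum>x\<in>X2. V a x) \<le> real (card codebooks) * (2 * real M * T)"
    using codebook_total[OF NK X2 X(3), where n = n and b = b and z = z]
    unfolding V_def T_def codebooks_def by simp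
  then obtain a where "a \<in> codebooks" and a: "(\<Sum>x\<in>X2. V a x) \<le> 2 * real M * T"
    by (rule exists_le_average[OF codebooks])
  obtain Y where Y: "Y \<subseteq> X2" "card Y = M" "\<And>x. x \<in> Y \<Longrightarrow> V a x \<le> 2 * T"
    by (rule expurgate[OF X2 V0 T0 a]) blast
  obtain \<phi> where \<phi>: "bij_betw \<phi> X Y"
    using finite_same_card_bij[OF X(1) finite_subset[OF Y(1) X2(1)]] X(2) Y(2) by auto
  show ?thesis
  proof (rule that[of "\<lambda>j x. a j (\<phi> x)"])
    fix x assume x: "x \<in> X"
    have "inj_on \<phi> (X - {x})" using \<phi> by (auto simp: bij_betw_def inj_on_def)
    then have "(\<Sum>y\<in>X - {x}. \<Prod>j<n. pair_mgf b N K z (a j (\<phi> x)) (a j (\<phi> y))) =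
        (\<Sum>y\<in>\<phi> ` (X - {x}). \<Prod>j<n. pair_mgf b N K z (a j (\<phi> x)) (a j y))"
      by (simp add: sum.reindex)
    also have "\<dots> \<le> V a (\<phi> x)"
      unfolding V_def using \<phi> x Y(1) X2 mgf0
      by (intro sum_mono2 prod_nonneg) (auto simp: bij_betw_def inj_on_def)
    also have "\<dots> \<le> 2 * T" using Y(3) \<phi> x by (auto simp: bij_betw_def)
    finally show "(\<Sum>y\<in>X - {x}. \<Prod>j<n. pair_mgf b N K z (a j (\<phi> x)) (a j (\<phi> y))) \<le>
        2 * ((2 * real M - 1) * ((real K * z + real N - real K) / real N) ^ n)"
      by (simp add: T_def)
  qed
qed

lemma card_secret_set_le:
  assumes "0 \<le> R"
  shows "real (card (secret_set (real n * R))) \<le> 2 * exp (real n * (R * ln 2))"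
proof -
  define k where "k = nat \<lceil>real n * R\<rceil>"
  have "real k \<le> real n * R + 1" unfolding k_def using assms by (simp add: of_nat_nat)
  then have "exp (real k * ln 2) \<le> exp ((real n * R + 1) * ln 2)" by simp
  also have "\<dots> = 2 * exp (real n * (R * ln 2))" by (simp add: exp_add algebra_simps)
  finally show ?thesis by (simp add: card_secret_set k_def power_as_exp)
qed

lemma safe_protocol_from_exponents:
  assumes NK: "0 < N" "0 < K" "K \<le> N" and safe: "b * real N * (1 - c) \<le> c * (1 - b) * real K"
    and b: "0 < b" "b < c" "c < 1" and n: "0 < n" and R: "0 \<le> R"
    and z': "0 < z'" "z' < 1" and z: "1 \<le> z"
  defines "\<gamma> \<equiv> z' * (b + (1 - b) * real K / real N) + (1 - b) * (real N - real K) / real N"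
    and "\<beta> \<equiv> (real K * z + real N - real K) / real N"
  assumes eps: "exp (real n * (ln \<gamma> - \<tau> * ln z')) + 8 * exp (real n * (R * ln 2 + ln \<beta> - \<tau> * ln z)) \<le> \<epsilon>"
  shows "\<exists>P D. safe_protocol n (real n * R) b c \<epsilon> P D"
proof -
  define M where "M = card (secret_set (real n * R))"
  have M: "0 < M" "real M \<le> 2 * exp (real n * (R * ln 2))"
    using card_secret_set_le[OF R, of n] by (simp_all add: M_def card_secret_set)
  have "real K \<le> real K * z" using z by (simp add: mult_le_cancel_left1)
  then have "0 < real K * z + real N - real K" using NK by linarith
  then have \<beta>: "0 < \<beta>" unfolding \<beta>_def using NK by simp
  have b01: "0 \<le> b" "b \<le> 1" using b by auto
  have \<gamma>: "0 < \<gamma>" unfolding \<gamma>_def using NK b z'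
    by (intro add_pos_nonneg mult_pos_pos) (auto intro!: divide_nonneg_pos mult_nonneg_nonneg add_pos_nonneg)
  obtain a where W: "\<And>x. x \<in> secret_set (real n * R) \<Longrightarrow>
      (\<Sum>y\<in>secret_set (real n * R) - {x}. \<Prod>j<n. pair_mgf b N K z (a j x) (a j y))
      \<le> 2 * ((2 * real M - 1) * ((real K * z + real N - real K) / real N) ^ n)"
    by (rule good_codebook_exists[OF NK b01 z finite_secret_set M_def[symmetric] M(1), where n = n]) blast
  have "2 * (2 * real M - 1) \<le> 8 * exp (real n * (R * ln 2))" using M(2) by (simp add: algebra_simps)
  then have "2 * ((2 * real M - 1) * \<beta> ^ n) \<le> 8 * exp (real n * (R * ln 2)) * \<beta> ^ n"
    using \<beta> by (simp add: mult.assoc[symmetric] mult_right_mono)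
  then have "exp (- \<tau> * real n * ln z) * (2 * ((2 * real M - 1) * \<beta> ^ n))
      \<le> exp (- \<tau> * real n * ln z) * (8 * exp (real n * (R * ln 2)) * \<beta> ^ n)"
    by (rule mult_left_mono) simp
  also have "\<dots> = 8 * exp (real n * (R * ln 2 + ln \<beta> - \<tau> * ln z))"
    unfolding power_as_exp[OF \<beta>] by (simp add: exp_add[symmetric] algebra_simps)
  finally have foreign: "exp (- \<tau> * real n * ln z) * (2 * ((2 * real M - 1) * \<beta> ^ n))
      \<le> 8 * exp (real n * (R * ln 2 + ln \<beta> - \<tau> * ln z))" .
  have own: "exp (- \<tau> * real n * ln z') * \<gamma> ^ n = exp (real n * (ln \<gamma> - \<tau> * ln z'))"
    unfolding power_as_exp[OF \<gamma>] by (simp add: exp_add[symmetric] algebra_simps)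
  have error: "exp (- \<tau> * real n * ln z') * \<gamma> ^ n
      + exp (- \<tau> * real n * ln z) * (2 * ((2 * real M - 1) * \<beta> ^ n)) \<le> \<epsilon>"
    using own foreign eps by linarith
  have "safe_protocol n (real n * R) b c \<epsilon> (window_protocol n N K a)
      (threshold_decoder n N K a \<tau> (secret_set (real n * R)))"
    by (rule window_protocol_safe[OF NK safe b n z' z W error[unfolded \<gamma>_def \<beta>_def]])
  then show ?thesis by blast
qed

lemma achievability_parameters:
  assumes b: "0 < b" "b < c" "c < 1" and R: "R * ln 2 < ln (1 - b) - b * ln (1 - c) / c"
  obtains N K \<tau> z z' where "0 < N" "0 < K" "K \<le> N" "b * real N * (1 - c) \<le> c * (1 - b) * real K"
    "0 < z'" "z' < 1" "1 \<le> z"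
    "ln (z' * (b + (1 - b) * real K / real N) + (1 - b) * (real N - real K) / real N) - \<tau> * ln z' < 0"
    "R * ln 2 + ln ((real K * z + real N - real K) / real N) - \<tau> * ln z < 0"
proof -
  obtain N K \<tau> where P: "0 < N" "0 < K" "K < N" "b * real N * (1 - c) \<le> c * (1 - b) * real K"
      "real K / real N < \<tau>" "\<tau> < b + (1 - b) * (real K / real N)" "\<tau> < 1"
      "R * ln 2 < kl_div \<tau> (real K / real N)"
    by (rule params_exist[OF b R])
  define q where "q = real K / real N"
  have q: "0 < q" "q < 1" using P by (auto simp: q_def)
  define z where "z = \<tau> * (1 - q) / (q * (1 - \<tau>))"
  have z: "1 \<le> z" "R * ln 2 + ln (q * z + (1 - q)) - \<tau> * ln z < 0"
    using chernoff_foreign_exponent[of q \<tau>] q P unfolding z_def q_def by auto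
  define p where "p = b + (1 - b) * q"
  have "(1 - b) * q < (1 - b) * 1" using b q by (intro mult_strict_left_mono) auto
  then have p: "0 < p" "p < 1" "\<tau> < p" using b q P by (auto simp: p_def q_def add_pos_nonneg)
  obtain z' where z': "0 < z'" "z' < 1" "ln (z' * p + (1 - p)) - \<tau> * ln z' < 0"
    by (rule chernoff_own_exponent[OF p])
  have "z' * (b + (1 - b) * real K / real N) + (1 - b) * (real N - real K) / real N = z' * p + (1 - p)"
    "(real K * z + real N - real K) / real N = q * z + (1 - q)"
    using P unfolding p_def q_def by (simp_all add: field_simps)
  then show ?thesis using that[of N K z' z \<tau>] P z z' by simp
qed

lemma exp_linear_eventually_small:
  fixes \<rho> \<delta> :: real
  assumes "\<rho> < 0" "0 < \<delta>"
  shows "\<forall>\<^sub>F n in sequentially. exp (real n * \<rho>) < \<delta>"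
proof -
  have "(\<lambda>n. exp \<rho> ^ n) \<longlonglongrightarrow> 0" using assms(1) by (intro LIMSEQ_power_zero) auto
  then have "\<forall>\<^sub>F n in sequentially. exp \<rho> ^ n < \<delta>" using assms(2) by (rule order_tendstoD(2))
  then show ?thesis by (rule eventually_mono) (simp add: exp_of_nat_mult)
qed

lemma achievable_below_capacity:
  assumes b: "0 < b" "b < c" "c < 1" and R: "0 \<le> R" "R < capacity_value b c"
  shows "safely_achievable b c R"
proof -
  have R': "R * ln 2 < ln (1 - b) - b * ln (1 - c) / c"
    using mult_strict_right_mono[OF R(2), of "ln 2"] capacity_value_ln[OF b] by simp
  obtain N K \<tau> z z' where P: "0 < N" "0 < K" "K \<le> N" "b * real N * (1 - c) \<le> c * (1 - b) * real K"
      "0 < z'" "z' < 1" "1 \<le> z"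
      and \<rho>: "ln (z' * (b + (1 - b) * real K / real N) + (1 - b) * (real N - real K) / real N) - \<tau> * ln z' < 0"
        "R * ln 2 + ln ((real K * z + real N - real K) / real N) - \<tau> * ln z < 0"
    by (rule achievability_parameters[OF b R'])
  define \<rho>1 where "\<rho>1 = ln (z' * (b + (1 - b) * real K / real N) + (1 - b) * (real N - real K) / real N) - \<tau> * ln z'"
  define \<rho>2 where "\<rho>2 = R * ln 2 + ln ((real K * z + real N - real K) / real N) - \<tau> * ln z"
  show ?thesis
    unfolding safely_achievable_def
  proof (intro allI impI)
    fix \<epsilon> :: real and n0 :: nat
    assume \<epsilon>: "0 < \<epsilon>"
    have "\<forall>\<^sub>F n in sequentially. exp (real n * \<rho>1) < \<epsilon> / 2"
      by (rule exp_linear_eventually_small) (use \<rho> \<epsilon> in \<open>auto simp: \<rho>1_def\<close>)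
    moreover have "\<forall>\<^sub>F n in sequentially. exp (real n * \<rho>2) < \<epsilon> / 16"
      by (rule exp_linear_eventually_small) (use \<rho> \<epsilon> in \<open>auto simp: \<rho>2_def\<close>)
    moreover have "\<forall>\<^sub>F n in sequentially. max n0 1 \<le> n" by (rule eventually_ge_at_top)
    ultimately have "\<forall>\<^sub>F n in sequentially.
        max n0 1 \<le> n \<and> exp (real n * \<rho>1) < \<epsilon> / 2 \<and> exp (real n * \<rho>2) < \<epsilon> / 16"
      by eventually_elim blast
    then obtain n where n: "n \<ge> max n0 1" "exp (real n * \<rho>1) < \<epsilon> / 2" "exp (real n * \<rho>2) < \<epsilon> / 16"
      using eventually_happens'[OF sequentially_bot] by blast
    have "\<exists>P D. safe_protocol n (real n * R) b c \<epsilon> P D"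
      using n unfolding \<rho>1_def \<rho>2_def
      by (intro safe_protocol_from_exponents[OF P(1-4) b _ R(1) P(5-7), where \<tau> = \<tau>]) auto
    then show "\<exists>n\<ge>n0. \<exists>P D. safe_protocol n (real n * R) b c \<epsilon> P D" using n(1) by auto
  qed
qed

text \<open>Nonpositive rates: one secret, and the protocol that sends nothing is safe.\<close>
definition silent_protocol :: protocol where
  "silent_protocol = \<lparr> stops = (\<lambda>_. True), speaker = (\<lambda>_. 0), p_unk = (\<lambda>_. return_pmf 0),
     p_know = (\<lambda>_ _. return_pmf 0), plength = 0 \<rparr>"

lemma achievable_nonpos:
  assumes b: "0 < b" "b < c" "c < 1" and R: "R \<le> 0"
  shows "safely_achievable b c R"
  unfolding safely_achievable_def
proof (intro allI impI)
  fix \<epsilon> :: real and n0 :: nat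
  assume \<epsilon>: "0 < \<epsilon>"
  define n where "n = max n0 1"
  have tr: "transcript silent_protocol x S = return_pmf []" for x S
    by (simp add: transcript_def silent_protocol_def)
  have fac: "pmf (transcript silent_protocol x S) t = (if t = [] then 1 else 0) * (\<Prod>i<n. (\<lambda>i v. 1::real) i (i \<in> S))"
    for x S t by (simp add: tr indicator_def)
  have X: "secret_set (real n * R) = {1}"
    using R by (simp add: secret_set_def mult_nonneg_nonpos)
  have post: "posterior n b silent_protocol x t i \<le> c" if "i < n" for x t i
    using posterior_factor[OF fac that, of b] b by auto
  have "cond_prob n b silent_protocol 1 (\<lambda>t. (\<forall>i<n. posterior n b silent_protocol 1 t i \<le> c) \<and> (\<lambda>_. 1) t = (1::nat))
      = (\<Sum>t\<in>{t\<in>{[]}. (\<forall>i<n. posterior n b silent_protocol 1 t i \<le> c) \<and> (\<lambda>_. 1) t = (1::nat)}.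
           trans_prob n b silent_protocol 1 t)"
    by (rule cond_prob_sum) (auto simp: tr)
  also have "\<dots> = trans_prob n b silent_protocol 1 []" using post by simp
  also have "\<dots> = 1" using trans_prob_factor[OF fac, of b] by simp
  finally have "safe_protocol n (real n * R) b c \<epsilon> silent_protocol (\<lambda>_. 1)"
    unfolding safe_protocol_def risky_protocol_def X using post \<epsilon>
    by (simp add: n_def valid_protocol_def silent_protocol_def)
  then show "\<exists>n\<ge>n0. \<exists>P D. safe_protocol n (real n * R) b c \<epsilon> P D"
    using max.cobounded1[of n0 1] unfolding n_def by blast
qed

theorem corollary4p3:
  fixes b c :: real
  assumes "0 < b" and "b < c" and "c < 1"
  shows "{R. safely_achievable b c R} \<noteq> {} \<and> bdd_above {R. safely_achievable b c R} \<and>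
         safe_capacity b c = (- b * log 2 (1 - c) + c * log 2 (1 - b)) / c"
proof -
  let ?A = "{R. safely_achievable b c R}"
  have b: "0 < b" "b < c" "c < 1" by fact+
  have upper: "R \<le> capacity_value b c" if "R \<in> ?A" for R
    using achievable_le_capacity[OF b] that by simp
  have below: "R \<in> ?A" if "R < capacity_value b c" for R
  proof (cases "R \<le> 0")
    case True then show ?thesis using achievable_nonpos[OF b] by simp
  next
    case False then show ?thesis using achievable_below_capacity[OF b _ that] by simp
  qed
  have nonempty: "?A \<noteq> {}" using achievable_nonpos[OF b, of 0] by auto
  have "Sup ?A = capacity_value b c"
  proof (rule cSup_eq_non_empty[OF nonempty upper])
    fix y assume y: "\<And>R. R \<in> ?A \<Longrightarrow> R \<le> y"
    show "capacity_value b c \<le> y"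
    proof (rule dense_le)
      fix R assume "R < capacity_value b c"
      then show "R \<le> y" using y below by blast
    qed
  qed
  moreover have "bdd_above ?A" by (rule bdd_aboveI[OF upper])
  ultimately show ?thesis using nonempty unfolding safe_capacity_def capacity_value_def by simp
qed

end
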